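(* Let $\mathcal{H}$ be a complex infinite-dimensional Hilbert space, let $n>1$ be an integer, and let $A\in B(\mathcal{H})$ satisfy $A^*A^n=A^nA^*$ (equivalently, $A^n$ is normal). Then $H_0(A-\lambda)=(A-\lambda)^{-1}(0)$ for every non-zero $\lambda\in\sigma(A)$, and $H_0(A)=A^{-n}(0)$. In particular, $A$ is polaroid.
   Context: $B(\mathcal{H})$ denotes the algebra of bounded linear operators on $\mathcal{H}$. For $S\in B(\mathcal{H})$, the quasi-nilpotent part of $S$ is $H_0(S)=\{x\in\mathcal{H}:\lim_{m\to\infty}\|S^mx\|^{1/m}=0\}$; $S^{-k}(0)$ denotes the kernel of $S^k$. A point $\lambda$ isolated in $\sigma(S)$ is a pole of $S$ if $0<\mathrm{asc}(S-\lambda)=\mathrm{dsc}(S-\lambda)<\infty$, where ascent/descent are the least $p\ge0$ with $(S-\lambda)^{-p}(0)=(S-\lambda)^{-(p+1)}(0)$, resp. $(S-\lambda)^p(\mathcal{H})=(S-\lambda)^{p+1}(\mathcal{H})$. $S$ is polaroid if every isolated point of $\sigma(S)$ is a pole of $S$. *)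

theory Defs
  imports "HOL-Analysis.Analysis"
begin

class complex_vector = real_vector +
  fixes scaleC :: "complex \<Rightarrow> 'a \<Rightarrow> 'a"  (infixr \<open>*\<^sub>C\<close> 75)
  assumes scaleC_add_right: "a *\<^sub>C (x + y) = a *\<^sub>C x + a *\<^sub>C y"
    and scaleC_add_left: "(a + b) *\<^sub>C x = a *\<^sub>C x + b *\<^sub>C x"
    and scaleC_scaleC: "a *\<^sub>C (b *\<^sub>C x) = (a * b) *\<^sub>C x"
    and scaleC_one: "1 *\<^sub>C x = x"
    and scaleR_scaleC: "scaleR r x = (complex_of_real r) *\<^sub>C x"

class complex_inner = complex_vector + real_normed_vector +
  fixes cinner :: "'a \<Rightarrow> 'a \<Rightarrow> complex"
  assumes cinner_commute: "cinner x y = cnj (cinner y x)"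
    and cinner_add_left: "cinner (x + y) z = cinner x z + cinner y z"
    and cinner_scaleC_left: "cinner (r *\<^sub>C x) y = cnj r * cinner x y"
    and cinner_self_real: "Im (cinner x x) = 0"
    and cinner_self_nonneg: "0 \<le> Re (cinner x x)"
    and cinner_eq_zero_iff: "cinner x x = 0 \<longleftrightarrow> x = 0"
    and norm_eq_sqrt_cinner: "norm x = sqrt (Re (cinner x x))"

text \<open>A complex Hilbert space is a type of class complex_inner and complete_space.\<close>

definition cspan :: "'a::complex_vector set \<Rightarrow> 'a set" where
  "cspan S = {(\<Sum>s\<in>T. c s *\<^sub>C s) | T c. finite T \<and> T \<subseteq> S}"

definition infinite_dimensional :: "'a::complex_vector itself \<Rightarrow> bool" where
  "infinite_dimensional _ \<longleftrightarrow> \<not> (\<exists>S::'a set. finite S \<and> cspan S = UNIV)"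

definition bounded_clinear :: "('a::{complex_vector,real_normed_vector} \<Rightarrow> 'b::{complex_vector,real_normed_vector}) \<Rightarrow> bool" where
  "bounded_clinear f \<longleftrightarrow> bounded_linear f \<and> (\<forall>c x. f (c *\<^sub>C x) = c *\<^sub>C f x)"

definition shift_op :: "('a::complex_vector \<Rightarrow> 'a) \<Rightarrow> complex \<Rightarrow> 'a \<Rightarrow> 'a" where
  "shift_op S l = (\<lambda>x. S x - l *\<^sub>C x)"

definition op_spectrum :: "('a::{complex_vector,real_normed_vector} \<Rightarrow> 'a) \<Rightarrow> complex set" where
  "op_spectrum S = {l. \<not> (\<exists>B. bounded_clinear B \<and> B \<circ> shift_op S l = id \<and> shift_op S l \<circ> B = id)}"

definition op_kernel :: "('a::zero \<Rightarrow> 'b::zero) \<Rightarrow> 'a set" where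
  "op_kernel T = {x. T x = 0}"

definition quasinilpotent_part :: "('a::real_normed_vector \<Rightarrow> 'a) \<Rightarrow> 'a set" where
  "quasinilpotent_part S = {x. (\<lambda>m. norm ((S ^^ m) x) powr (1 / real m)) \<longlonglongrightarrow> 0}"

definition is_ascent :: "('a::zero \<Rightarrow> 'a) \<Rightarrow> nat \<Rightarrow> bool" where
  "is_ascent T p \<longleftrightarrow> op_kernel (T ^^ p) = op_kernel (T ^^ Suc p) \<and>
      (\<forall>q<p. op_kernel (T ^^ q) \<noteq> op_kernel (T ^^ Suc q))"

definition is_descent :: "('a \<Rightarrow> 'a) \<Rightarrow> nat \<Rightarrow> bool" where
  "is_descent T p \<longleftrightarrow> range (T ^^ p) = range (T ^^ Suc p) \<and>
      (\<forall>q<p. range (T ^^ q) \<noteq> range (T ^^ Suc q))"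

definition is_pole :: "('a::{complex_vector,real_normed_vector} \<Rightarrow> 'a) \<Rightarrow> complex \<Rightarrow> bool" where
  "is_pole S l \<longleftrightarrow> l \<in> op_spectrum S \<and> \<not> l islimpt op_spectrum S \<and>
     (\<exists>p>0. is_ascent (shift_op S l) p \<and> is_descent (shift_op S l) p)"

definition polaroid :: "('a::{complex_vector,real_normed_vector} \<Rightarrow> 'a) \<Rightarrow> bool" where
  "polaroid S \<longleftrightarrow> (\<forall>l. l \<in> op_spectrum S \<and> \<not> l islimpt op_spectrum S \<longrightarrow> is_pole S l)"

end

theory Submission
  imports Defs "HOL-Complex_Analysis.Complex_Analysis"
begin

(*
  For a normal operator N the norms a_k = norm (N^k x) are log-convex, a_(k+1)^2 <= a_k a_(k+2),
  so they grow at least geometrically once N x ~= 0; hence the quasi-nilpotent part of N is its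
  kernel. Since H_0(A) is contained in H_0(A^n) and A^n is normal, H_0(A) = ker A^n. For l ~= 0,
  factor A^n - l^n = B (A - l) with B commuting with A - l: then H_0(A - l) lies in
  H_0(A^n - l^n) = ker (A^n - l^n), and as B = n l^(n-1) + (A - l) C with n l^(n-1) ~= 0, the
  operator A - l has a bounded commuting right inverse on ker B, which forces (A - l) x = 0.

  At an isolated point l of the spectrum, residues of the resolvent give bounded operators P and S
  with S (A - l) = (A - l) S = I - P and ran P inside H_0(A - l). Once H_0(A - l) = ker (A - l)^p,
  the kernels and ranges of the powers of A - l stabilise at p, so ascent and descent are finite,
  hence equal; they are positive, for otherwise P = 0 and S would invert A - l.
*)

section \<open>Complex inner product spaces\<close>

declare scaleC_one [simp] scaleC_scaleC [simp]

lemma scaleC_zero_left [simp]: "(0::complex) *\<^sub>C x = (0::'a::complex_vector)"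
  using scaleR_scaleC[of 0 x] by simp

lemma scaleC_zero_right [simp]: "c *\<^sub>C (0::'a::complex_vector) = 0"
proof -
  have "c *\<^sub>C (0::'a) = c *\<^sub>C 0 + c *\<^sub>C 0" by (metis add.right_neutral scaleC_add_right)
  then show ?thesis by simp
qed

lemma scaleC_minus_left: "(- c) *\<^sub>C x = - (c *\<^sub>C (x::'a::complex_vector))"
proof -
  have "c *\<^sub>C x + (- c) *\<^sub>C x = 0" by (simp flip: scaleC_add_left)
  then show ?thesis by (simp add: eq_neg_iff_add_eq_0 add.commute)
qed

lemma scaleC_minus_right: "c *\<^sub>C (- x) = - (c *\<^sub>C (x::'a::complex_vector))"
proof -
  have "c *\<^sub>C x + c *\<^sub>C (- x) = 0" by (simp flip: scaleC_add_right)
  then show ?thesis by (simp add: eq_neg_iff_add_eq_0 add.commute)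
qed

lemma scaleC_diff_right: "c *\<^sub>C (x - y) = c *\<^sub>C x - c *\<^sub>C (y::'a::complex_vector)"
  by (simp only: diff_conv_add_uminus scaleC_add_right scaleC_minus_right)

lemma scaleC_diff_left: "(a - b) *\<^sub>C x = a *\<^sub>C x - b *\<^sub>C (x::'a::complex_vector)"
  by (simp only: diff_conv_add_uminus scaleC_add_left scaleC_minus_left)

lemma scaleC_2: "(2::complex) *\<^sub>C x = x + (x::'a::complex_vector)"
  by (metis one_add_one scaleC_add_left scaleC_one)

lemma cinner_add_right: "cinner x (y + z) = cinner x y + cinner x (z::'a::complex_inner)"
  by (metis cinner_add_left cinner_commute complex_cnj_add)

lemma cinner_scaleC_right: "cinner x (c *\<^sub>C y) = c * cinner x (y::'a::complex_inner)"
  by (metis cinner_commute cinner_scaleC_left complex_cnj_cnj complex_cnj_mult)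

lemma cinner_zero_left [simp]: "cinner 0 (y::'a::complex_inner) = 0"
  using cinner_add_left[of "0::'a" 0 y] by simp

lemma cinner_zero_right [simp]: "cinner (x::'a::complex_inner) 0 = 0"
  using cinner_add_right[of x 0 0] by simp

lemma cinner_minus_left: "cinner (- x) (y::'a::complex_inner) = - cinner x y"
  using cinner_scaleC_left[of "-1" x y] by (simp add: scaleC_minus_left)

lemma cinner_minus_right: "cinner x (- y::'a::complex_inner) = - cinner x y"
  using cinner_scaleC_right[of x "-1" y] by (simp add: scaleC_minus_left)

lemma cinner_diff_left: "cinner (x - y) (z::'a::complex_inner) = cinner x z - cinner y z"
  by (simp only: diff_conv_add_uminus cinner_add_left cinner_minus_left)

lemma cinner_diff_right: "cinner x (y - z::'a::complex_inner) = cinner x y - cinner x z"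
  by (simp only: diff_conv_add_uminus cinner_add_right cinner_minus_right)

lemmas cinner_simps = cinner_add_left cinner_add_right cinner_diff_left cinner_diff_right
  cinner_scaleC_left cinner_scaleC_right cinner_minus_left cinner_minus_right

lemma cinner_self_norm: "cinner x x = complex_of_real ((norm (x::'a::complex_inner))\<^sup>2)"
proof -
  have "Re (cinner x x) = (norm x)\<^sup>2"
    using norm_eq_sqrt_cinner[of x] cinner_self_nonneg[of x] by simp
  then show ?thesis using cinner_self_real[of x] by (simp add: complex_eq_iff)
qed

lemma norm_scaleC: "norm (c *\<^sub>C x) = cmod c * norm (x::'a::complex_inner)"
proof -
  have "cinner (c *\<^sub>C x) (c *\<^sub>C x) = (cnj c * c) * cinner x x"
    by (simp add: cinner_simps mult.assoc)
  also have "cnj c * c = complex_of_real ((cmod c)\<^sup>2)"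
    by (metis complex_norm_square mult.commute of_real_power)
  finally have "complex_of_real ((norm (c *\<^sub>C x))\<^sup>2) = complex_of_real ((cmod c)\<^sup>2 * (norm x)\<^sup>2)"
    by (simp only: cinner_self_norm of_real_mult)
  then have "(norm (c *\<^sub>C x))\<^sup>2 = ((cmod c) * norm x)\<^sup>2"
    by (simp only: of_real_eq_iff power_mult_distrib)
  then show ?thesis by (simp add: power2_eq_iff_nonneg)
qed

lemma cinner_ext: assumes "\<And>y. cinner y a = cinner y (b::'a::complex_inner)" shows "a = b"
proof -
  have "cinner (a - b) (a - b) = 0" by (simp add: cinner_diff_right assms)
  then show ?thesis by (simp add: cinner_eq_zero_iff)
qed

lemma norm_diff_projection_power2:
  fixes x y :: "'a::complex_inner"
  assumes "y \<noteq> 0"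
  shows "(norm (x - (cinner y x / complex_of_real ((norm y)\<^sup>2)) *\<^sub>C y))\<^sup>2
    = (norm x)\<^sup>2 - (cmod (cinner y x))\<^sup>2 / (norm y)\<^sup>2"
proof -
  define N where "N = (norm y)\<^sup>2"
  define a where "a = cinner y x"
  define t where "t = a / complex_of_real N"
  have N: "N > 0" using assms by (simp add: N_def)
  have "cinner (x - t *\<^sub>C y) (x - t *\<^sub>C y)
      = cinner x x - t * cnj a - cnj t * a + cnj t * t * complex_of_real N"
    by (simp add: cinner_simps a_def cinner_commute[of x y] cinner_self_norm[of y] N_def algebra_simps)
  also have "\<dots> = complex_of_real ((norm x)\<^sup>2 - (cmod a)\<^sup>2 / N)"
    using N by (simp add: t_def cinner_self_norm field_simps) (metis complex_norm_square of_real_power)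
  finally show ?thesis by (simp only: cinner_self_norm of_real_eq_iff a_def N_def t_def)
qed

lemma norm_cinner_le: "cmod (cinner x y) \<le> norm x * norm (y::'a::complex_inner)"
proof (cases "y = 0")
  case False
  have "0 \<le> (norm x)\<^sup>2 - (cmod (cinner y x))\<^sup>2 / (norm y)\<^sup>2"
    by (metis norm_diff_projection_power2[OF False] zero_le_power2)
  then have "(cmod (cinner y x))\<^sup>2 \<le> (norm x * norm y)\<^sup>2"
    using False by (simp add: field_simps power_mult_distrib)
  then have "cmod (cinner y x) \<le> norm x * norm y" by (rule power2_le_imp_le) simp
  then show ?thesis by (metis cinner_commute complex_mod_cnj)
qed simp

lemma cinner_eq_0_if_norm_minimal:
  fixes w z :: "'a::complex_inner"
  assumes "\<And>t. norm w \<le> norm (w - t *\<^sub>C z)"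
  shows "cinner z w = 0"
proof (cases "z = 0")
  case False
  have "(norm w)\<^sup>2 \<le> (norm (w - (cinner z w / complex_of_real ((norm z)\<^sup>2)) *\<^sub>C z))\<^sup>2"
    by (rule power_mono[OF assms]) simp
  also have "\<dots> = (norm w)\<^sup>2 - (cmod (cinner z w))\<^sup>2 / (norm z)\<^sup>2"
    by (rule norm_diff_projection_power2[OF False])
  finally have "(cmod (cinner z w))\<^sup>2 / (norm z)\<^sup>2 \<le> 0" by simp
  then show ?thesis using False by (simp add: divide_le_0_iff)
qed simp

lemma norm_diff_midpoint_power2:
  fixes u a b :: "'a::complex_inner"
  shows "(norm (a - b))\<^sup>2
    = 2 * (norm (u - a))\<^sup>2 + 2 * (norm (u - b))\<^sup>2 - 4 * (norm (u - (1/2::complex) *\<^sub>C (a + b)))\<^sup>2"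
proof -
  define v w where "v = u - a" and "w = u - b"
  have "cinner (v + w) (v + w) + cinner (v - w) (v - w) = 2 * cinner v v + 2 * cinner w w"
    by (simp add: cinner_simps algebra_simps)
  then have "complex_of_real ((norm (v + w))\<^sup>2 + (norm (v - w))\<^sup>2)
      = complex_of_real (2 * (norm v)\<^sup>2 + 2 * (norm w)\<^sup>2)"
    by (simp add: cinner_self_norm)
  then have parallelogram: "(norm (v + w))\<^sup>2 + (norm (v - w))\<^sup>2 = 2 * (norm v)\<^sup>2 + 2 * (norm w)\<^sup>2"
    by (simp only: of_real_eq_iff)
  have "v + w = (2::complex) *\<^sub>C (u - (1/2::complex) *\<^sub>C (a + b))"
    by (simp add: v_def w_def scaleC_diff_right scaleC_add_right scaleC_2 algebra_simps)
  then have "(norm (v + w))\<^sup>2 = 4 * (norm (u - (1/2::complex) *\<^sub>C (a + b)))\<^sup>2"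
    by (simp add: norm_scaleC power2_eq_square)
  moreover have "v - w = b - a" by (simp add: v_def w_def)
  ultimately show ?thesis using parallelogram by (simp add: v_def w_def norm_minus_commute)
qed

lemma closest_point_exists_midpoint_closed:
  fixes Z :: "'a::{complex_inner, complete_space} set"
  assumes "closed Z" and "z1 \<in> Z"
    and midpoint: "\<And>a b. a \<in> Z \<Longrightarrow> b \<in> Z \<Longrightarrow> (1/2::complex) *\<^sub>C (a + b) \<in> Z"
  shows "\<exists>z0\<in>Z. \<forall>z\<in>Z. norm (u - z0) \<le> norm (u - z)"
proof -
  define d where "d = Inf ((\<lambda>z. (norm (u - z))\<^sup>2) ` Z)"
  have bdd: "bdd_below ((\<lambda>z. (norm (u - z))\<^sup>2) ` Z)" by (rule bdd_belowI[of _ 0]) auto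
  have d_le: "d \<le> (norm (u - z))\<^sup>2" if "z \<in> Z" for z
    unfolding d_def using that bdd by (simp add: cInf_lower)
  have "\<exists>z\<in>Z. (norm (u - z))\<^sup>2 < d + 1 / (real k + 1)" for k
    using cInf_lessD[of "(\<lambda>z. (norm (u - z))\<^sup>2) ` Z" "d + 1 / (real k + 1)"] assms(2)
    unfolding d_def by force
  then obtain zs where zs: "\<And>k. zs k \<in> Z" "\<And>k. (norm (u - zs k))\<^sup>2 < d + 1 / (real k + 1)"
    by metis
  have zs_close: "(norm (zs j - zs k))\<^sup>2 \<le> 2 / (real j + 1) + 2 / (real k + 1)" for j k
    using norm_diff_midpoint_power2[of "zs j" "zs k" u] zs(2)[of j] zs(2)[of k]
      d_le[OF midpoint[OF zs(1)[of j] zs(1)[of k]]] by simp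
  have "Cauchy zs"
  proof (rule CauchyI)
    fix e :: real assume e: "e > 0"
    obtain M :: nat where M: "4 / e\<^sup>2 < real M" using reals_Archimedean2 by blast
    have M_pos: "0 < real M" using M e by (smt (verit) divide_pos_pos zero_less_power)
    have "norm (zs j - zs k) < e" if "M \<le> j" "M \<le> k" for j k
    proof -
      have "2 / (real j + 1) \<le> 2 / real M" "2 / (real k + 1) \<le> 2 / real M"
        using that M_pos by (simp_all add: frac_le)
      moreover have "4 / real M < e\<^sup>2" using M e M_pos by (simp add: field_simps)
      ultimately have "(norm (zs j - zs k))\<^sup>2 < e\<^sup>2" using zs_close[of j k] by simp
      then show ?thesis using e by (simp add: power_less_imp_less_base)
    qed
    then show "\<exists>M. \<forall>m\<ge>M. \<forall>n\<ge>M. norm (zs m - zs n) < e" by blast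
  qed
  then obtain z0 where z0: "zs \<longlonglongrightarrow> z0" using Cauchy_convergent_iff convergent_def by blast
  have "z0 \<in> Z" using closed_sequentially[OF assms(1) zs(1) z0] .
  have "(\<lambda>k. (norm (u - zs k))\<^sup>2) \<longlonglongrightarrow> (norm (u - z0))\<^sup>2"
    by (intro tendsto_intros z0)
  moreover have "(\<lambda>k. d + 1 / (real k + 1)) \<longlonglongrightarrow> d + 0"
    by (intro tendsto_intros) (use LIMSEQ_inverse_real_of_nat in \<open>simp add: inverse_eq_divide add.commute\<close>)
  ultimately have "(norm (u - z0))\<^sup>2 \<le> d + 0"
    by (rule LIMSEQ_le) (use zs(2) less_imp_le in blast)
  then have "norm (u - z0) \<le> norm (u - z)" if "z \<in> Z" for z
    using d_le[OF that] by (simp add: power2_le_imp_le)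
  then show ?thesis using \<open>z0 \<in> Z\<close> by blast
qed

lemma riesz_representation:
  fixes F :: "'a::{complex_inner, complete_space} \<Rightarrow> complex"
  assumes add: "\<And>y1 y2. F (y1 + y2) = F y1 + F y2"
    and scale: "\<And>c y. F (c *\<^sub>C y) = cnj c * F y"
    and bound: "\<And>y. cmod (F y) \<le> K * norm y"
  shows "\<exists>v. \<forall>y. F y = cinner y v"
proof (cases "\<forall>y. F y = 0")
  case True then show ?thesis by (intro exI[of _ 0]) simp
next
  case False
  then obtain u where u: "F u \<noteq> 0" by blast
  define Z where "Z = {y. F y = 0}"
  have "bounded_linear F"
  proof (rule bounded_linear_intro[where K=K])
    show "F (r *\<^sub>R y) = r *\<^sub>R F y" for r y by (simp add: scaleR_scaleC scale scaleR_conv_of_real)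
  qed (simp_all add: add bound mult.commute)
  then have "closed Z"
    unfolding Z_def by (intro closed_Collect_eq continuous_on_const linear_continuous_on)
  have F_diff: "F (a - b) = F a - F b" for a b
    using add[of "a - b" b] by simp
  have "F 0 = 0" using scale[of 0 0] by simp
  then obtain z0 where z0: "z0 \<in> Z" "\<And>z. z \<in> Z \<Longrightarrow> norm (u - z0) \<le> norm (u - z)"
    using closest_point_exists_midpoint_closed[OF \<open>closed Z\<close>, of 0 u] by (auto simp: Z_def scale add)
  define w where "w = u - z0"
  have Fw: "F w \<noteq> 0" using u z0(1) by (simp add: w_def F_diff Z_def)
  have orth: "cinner z w = 0" if "z \<in> Z" for z
  proof (rule cinner_eq_0_if_norm_minimal)
    fix t
    have "z0 + t *\<^sub>C z \<in> Z" using that z0(1) by (simp add: Z_def add scale)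
    then have "norm (u - z0) \<le> norm (u - (z0 + t *\<^sub>C z))" by (rule z0(2))
    then show "norm w \<le> norm (w - t *\<^sub>C z)" by (simp add: w_def algebra_simps)
  qed
  define N where "N = (norm w)\<^sup>2"
  have N: "N > 0" using Fw \<open>F 0 = 0\<close> by (auto simp: N_def)
  show ?thesis
  proof (intro exI[of _ "(F w / complex_of_real N) *\<^sub>C w"] allI)
    fix y
    have "F (cnj (F w) *\<^sub>C y - cnj (F y) *\<^sub>C w) = 0" by (simp add: F_diff scale mult.commute)
    then have "cinner (cnj (F w) *\<^sub>C y - cnj (F y) *\<^sub>C w) w = 0" by (intro orth) (simp add: Z_def)
    then have "F w * cinner y w - F y * complex_of_real N = 0"
      by (simp add: cinner_simps cinner_self_norm N_def)
    then show "F y = cinner y ((F w / complex_of_real N) *\<^sub>C w)"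
      using N by (simp add: cinner_simps field_simps)
  qed
qed

section \<open>Bounded complex-linear operators\<close>

lemma bounded_linear_scaleC: "bounded_linear (\<lambda>v::'a::complex_inner. c *\<^sub>C v)"
proof (rule bounded_linear_intro[where K="cmod c"])
  show "c *\<^sub>C (r *\<^sub>R x) = r *\<^sub>R (c *\<^sub>C x)" for r and x :: 'a
    by (simp add: scaleR_scaleC mult.commute)
qed (simp_all add: scaleC_add_right norm_scaleC mult.commute)

lemma bounded_clinear_bounded_linear: "bounded_clinear f \<Longrightarrow> bounded_linear f"
  by (simp add: bounded_clinear_def)

context
  fixes f :: "'a::{complex_vector,real_normed_vector} \<Rightarrow> 'b::{complex_vector,real_normed_vector}"
  assumes f: "bounded_clinear f"
begin

lemma clinear_add: "f (x + y) = f x + f y"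
  using f by (simp add: bounded_clinear_def linear_add bounded_linear.linear)

lemma clinear_diff: "f (x - y) = f x - f y"
  using f by (simp add: bounded_clinear_def linear_diff bounded_linear.linear)

lemma clinear_minus: "f (- x) = - f x"
  using f by (simp add: bounded_clinear_def linear_neg bounded_linear.linear)

lemma clinear_zero: "f 0 = 0"
  using f by (simp add: bounded_clinear_def linear_0 bounded_linear.linear)

lemma clinear_scaleC: "f (c *\<^sub>C x) = c *\<^sub>C f x"
  using f by (simp add: bounded_clinear_def)

lemma bounded_clinear_pos_bound: "\<exists>K>0. \<forall>x. norm (f x) \<le> K * norm x"
  using f bounded_linear.pos_bounded by (fastforce simp: bounded_clinear_def mult.commute)

end

lemma bounded_clinear_ident: "bounded_clinear (\<lambda>x::'a::complex_inner. x)"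
  by (simp add: bounded_clinear_def)

lemma bounded_clinear_compose:
  assumes "bounded_clinear (f::'b::complex_inner \<Rightarrow> 'c::complex_inner)" "bounded_clinear (g::'a::complex_inner \<Rightarrow> 'b)"
  shows "bounded_clinear (\<lambda>x. f (g x))"
  using assms unfolding bounded_clinear_def by (auto intro: bounded_linear_compose)

lemma bounded_clinear_add:
  assumes "bounded_clinear (f::'a::complex_inner \<Rightarrow> 'b::complex_inner)" "bounded_clinear g"
  shows "bounded_clinear (\<lambda>x. f x + g x)"
  using assms unfolding bounded_clinear_def by (auto intro: bounded_linear_add simp: scaleC_add_right)

lemma bounded_clinear_diff:
  assumes "bounded_clinear (f::'a::complex_inner \<Rightarrow> 'b::complex_inner)" "bounded_clinear g"
  shows "bounded_clinear (\<lambda>x. f x - g x)"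
  using assms unfolding bounded_clinear_def by (auto intro: bounded_linear_sub simp: scaleC_diff_right)

lemma bounded_clinear_scaleC:
  assumes "bounded_clinear (f::'a::complex_inner \<Rightarrow> 'b::complex_inner)"
  shows "bounded_clinear (\<lambda>x. c *\<^sub>C f x)"
  using assms bounded_linear_compose[OF bounded_linear_scaleC bounded_clinear_bounded_linear[OF assms]]
  by (simp add: bounded_clinear_def mult.commute)

lemma bounded_clinear_zero: "bounded_clinear (\<lambda>x::'a::complex_inner. 0::'b::complex_inner)"
  by (simp add: bounded_clinear_def)

lemma bounded_clinear_funpow:
  assumes "bounded_clinear (f::'a::complex_inner \<Rightarrow> 'a)"
  shows "bounded_clinear (f ^^ m)"
  by (induction m) (simp_all add: id_def bounded_clinear_ident bounded_clinear_compose[OF assms])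

lemma bounded_clinear_shift_op:
  assumes "bounded_clinear (A::'a::complex_inner \<Rightarrow> 'a)"
  shows "bounded_clinear (shift_op A l)"
  unfolding shift_op_def
  by (rule bounded_clinear_diff[OF assms bounded_clinear_scaleC[OF bounded_clinear_ident]])

lemma funpow_commute:
  assumes "\<And>x. f (g x) = g (f x)"
  shows "(f ^^ m) (g x) = g ((f ^^ m) x)"
  by (induction m) (simp_all add: assms)

lemma bounded_clinear_inverseI:
  fixes T :: "'a::complex_inner \<Rightarrow> 'a"
  assumes T: "bounded_clinear T" and surj: "\<And>b. \<exists>u. T u = b"
    and bounded_below: "\<And>u. norm u \<le> K * norm (T u)"
  shows "\<exists>B. bounded_clinear B \<and> B \<circ> T = id \<and> T \<circ> B = id"
proof -
  have inj: "u = v" if "T u = T v" for u v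
    using bounded_below[of "u - v"] that by (simp add: clinear_diff[OF T])
  define B where "B b = (SOME u. T u = b)" for b
  have TB: "T (B b) = b" for b unfolding B_def by (rule someI_ex[OF surj])
  have BT: "B (T u) = u" for u by (rule inj) (simp add: TB)
  have B_scaleC: "B (c *\<^sub>C x) = c *\<^sub>C B x" for c x by (rule inj) (simp add: TB clinear_scaleC[OF T])
  have "bounded_linear B"
  proof (rule bounded_linear_intro[where K=K])
    show "B (x + y) = B x + B y" for x y by (rule inj) (simp add: TB clinear_add[OF T])
    show "B (r *\<^sub>R x) = r *\<^sub>R B x" for r x by (simp add: scaleR_scaleC B_scaleC)
    show "norm (B x) \<le> norm x * K" for x using bounded_below[of "B x"] by (simp add: TB mult.commute)
  qed
  then show ?thesis using TB BT B_scaleC by (intro exI[of _ B]) (auto simp: fun_eq_iff bounded_clinear_def)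
qed

lemma bounded_linear_cinner_right: "bounded_linear (\<lambda>v. cinner y (v::'a::complex_inner))"
proof (rule bounded_linear_intro[where K="norm y"])
  show "cinner y (r *\<^sub>R a) = r *\<^sub>R cinner y a" for r a
    by (simp add: scaleR_scaleC cinner_scaleC_right scaleR_conv_of_real)
  show "norm (cinner y a) \<le> norm a * norm y" for a
    using norm_cinner_le[of y a] by (simp add: mult.commute)
qed (simp add: cinner_add_right)

lemma le_if_power2_le_mult: "a\<^sup>2 \<le> c * a \<Longrightarrow> 0 \<le> c \<Longrightarrow> (a::real) \<le> c"
  by (cases "a \<le> 0") (auto simp: power2_eq_square mult_le_cancel_right)

lemma sesquilinear_form_representation:
  fixes F :: "'a::{complex_inner,complete_space} \<Rightarrow> 'a \<Rightarrow> complex"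
  assumes add_right: "\<And>x y1 y2. F x (y1 + y2) = F x y1 + F x y2"
    and scale_right: "\<And>x c y. F x (c *\<^sub>C y) = cnj c * F x y"
    and add_left: "\<And>x1 x2 y. F (x1 + x2) y = F x1 y + F x2 y"
    and scale_left: "\<And>c x y. F (c *\<^sub>C x) y = c * F x y"
    and "0 \<le> K" and bound: "\<And>x y. cmod (F x y) \<le> K * norm x * norm y"
  shows "\<exists>B. bounded_clinear B \<and> (\<forall>x y. cinner y (B x) = F x y)"
proof -
  have "\<exists>v. \<forall>y. F x y = cinner y v" for x
    by (rule riesz_representation[where K="K * norm x"]) (auto simp: add_right scale_right bound)
  then obtain B where B: "\<And>x y. F x y = cinner y (B x)" by metis
  have B_scaleC: "B (c *\<^sub>C x) = c *\<^sub>C B x" for c x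
    by (rule cinner_ext) (simp add: B[symmetric] scale_left cinner_scaleC_right)
  have "bounded_linear B"
  proof (rule bounded_linear_intro[where K=K])
    show "B (x + y) = B x + B y" for x y
      by (rule cinner_ext) (simp add: B[symmetric] add_left cinner_add_right)
    show "B (r *\<^sub>R x) = r *\<^sub>R B x" for r x by (simp add: scaleR_scaleC B_scaleC)
    show "norm (B x) \<le> norm x * K" for x
    proof -
      have "(norm (B x))\<^sup>2 \<le> cmod (F x (B x))"
        by (simp add: B cinner_self_norm norm_power)
      also have "\<dots> \<le> (norm x * K) * norm (B x)" using bound by (simp add: mult_ac)
      finally show ?thesis using \<open>0 \<le> K\<close> by (simp add: le_if_power2_le_mult)
    qed
  qed
  then show ?thesis using B_scaleC B by (auto simp: bounded_clinear_def)
qed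

lemma bounded_clinear_adjoint:
  fixes A B :: "'a::complex_inner \<Rightarrow> 'a"
  assumes A: "bounded_clinear A" and adj: "\<And>x y. cinner (A x) y = cinner x (B y)"
  shows "bounded_clinear B"
proof -
  obtain K where K: "K > 0" "\<And>x. norm (A x) \<le> K * norm x"
    using bounded_clinear_pos_bound[OF A] by blast
  have B_scaleC: "B (c *\<^sub>C y) = c *\<^sub>C B y" for c y
    by (rule cinner_ext) (simp add: adj[symmetric] cinner_simps)
  have "bounded_linear B"
  proof (rule bounded_linear_intro[where K=K])
    show "B (x + y) = B x + B y" for x y
      by (rule cinner_ext) (simp add: adj[symmetric] cinner_simps)
    show "B (r *\<^sub>R x) = r *\<^sub>R B x" for r x by (simp add: scaleR_scaleC B_scaleC)
    show "norm (B y) \<le> norm y * K" for y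
    proof -
      have "(norm (B y))\<^sup>2 = Re (cinner (A (B y)) y)" by (simp add: adj cinner_self_norm)
      also have "\<dots> \<le> norm (A (B y)) * norm y"
        using complex_Re_le_cmod norm_cinner_le order_trans by blast
      also have "\<dots> \<le> (norm y * K) * norm (B y)"
        using mult_left_mono[OF K(2)[of "B y"] norm_ge_zero[of y]] by (simp add: mult_ac)
      finally show ?thesis using K(1) by (simp add: le_if_power2_le_mult)
    qed
  qed
  then show ?thesis using B_scaleC by (simp add: bounded_clinear_def)
qed

lemma cinner_funpow_adjoint:
  fixes A B :: "'a::complex_inner \<Rightarrow> 'a"
  assumes "\<And>x y. cinner (A x) y = cinner x (B y)"
  shows "cinner ((A ^^ k) x) y = cinner x ((B ^^ k) y)"
proof (induction k arbitrary: y)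
  case (Suc k)
  have "cinner ((A ^^ Suc k) x) y = cinner ((A ^^ k) x) (B y)" by (simp add: assms)
  also have "\<dots> = cinner x ((B ^^ Suc k) y)" by (simp add: Suc funpow_swap1)
  finally show ?case .
qed simp

lemma cinner_shift_op_adjoint:
  fixes A B :: "'a::complex_inner \<Rightarrow> 'a"
  assumes "\<And>x y. cinner (A x) y = cinner x (B y)"
  shows "cinner (shift_op A l x) y = cinner x (shift_op B (cnj l) y)"
  by (simp add: shift_op_def cinner_simps assms)

lemma cinner_shift_op_adjoint_right:
  fixes A B :: "'a::complex_inner \<Rightarrow> 'a"
  assumes "\<And>x y. cinner (A x) y = cinner x (B y)"
  shows "cinner y (shift_op A l x) = cinner (shift_op B (cnj l) y) x"
  by (metis cinner_commute cinner_shift_op_adjoint[OF assms])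

section \<open>The quasi-nilpotent part\<close>

lemma power_powr_inverse: "0 < K \<Longrightarrow> 0 < m \<Longrightarrow> (K ^ m) powr (1 / real m) = K"
  by (simp add: powr_realpow[symmetric] powr_powr)

lemma bounded_linear_funpow_bound:
  assumes "bounded_linear (B::'a::real_normed_vector \<Rightarrow> 'a)"
  obtains K where "K > 0" "\<And>m v. norm ((B ^^ m) v) \<le> K ^ m * norm v"
proof -
  obtain K where K: "K > 0" "\<And>v. norm (B v) \<le> norm v * K"
    using bounded_linear.pos_bounded[OF assms] by blast
  have "norm ((B ^^ m) v) \<le> K ^ m * norm v" for m v
  proof (induction m)
    case (Suc m)
    have "norm ((B ^^ Suc m) v) \<le> K * norm ((B ^^ m) v)" using K(2) by (simp add: mult.commute)
    also have "\<dots> \<le> K * (K ^ m * norm v)" using Suc K(1) by (simp add: mult_left_mono)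
    finally show ?case by (simp add: mult.assoc)
  qed simp
  then show ?thesis using that K(1) by blast
qed

lemma quasinilpotent_partI_dominated:
  fixes S T :: "'a::real_normed_vector \<Rightarrow> 'a"
  assumes "K > 0"
    and "eventually (\<lambda>m. norm ((S ^^ m) x) \<le> K ^ m * norm ((T ^^ m) y)) sequentially"
    and "y \<in> quasinilpotent_part T"
  shows "x \<in> quasinilpotent_part S"
proof -
  have "(\<lambda>m. norm ((T ^^ m) y) powr (1 / real m)) \<longlonglongrightarrow> 0"
    using assms(3) by (simp add: quasinilpotent_part_def)
  then have lim: "(\<lambda>m. K * norm ((T ^^ m) y) powr (1 / real m)) \<longlonglongrightarrow> 0"
    using tendsto_mult_right_zero by blast
  have bound: "eventually (\<lambda>m. norm ((S ^^ m) x) powr (1 / real m)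
      \<le> K * norm ((T ^^ m) y) powr (1 / real m)) sequentially"
    using assms(2) eventually_gt_at_top[of 0]
  proof eventually_elim
    case (elim m)
    have "norm ((S ^^ m) x) powr (1 / real m) \<le> (K ^ m * norm ((T ^^ m) y)) powr (1 / real m)"
      using elim by (intro powr_mono2) auto
    also have "\<dots> = (K ^ m) powr (1 / real m) * norm ((T ^^ m) y) powr (1 / real m)"
      by (rule powr_mult)
    also have "\<dots> = K * norm ((T ^^ m) y) powr (1 / real m)"
      using assms(1) elim by (simp add: power_powr_inverse)
    finally show ?case .
  qed
  have "(\<lambda>m. norm ((S ^^ m) x) powr (1 / real m)) \<longlonglongrightarrow> 0"
    by (rule tendsto_sandwich[OF _ bound tendsto_const lim]) simp
  then show ?thesis by (simp add: quasinilpotent_part_def)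
qed

lemma quasinilpotent_part_bounded_below_eq_0:
  fixes T :: "'a::real_normed_vector \<Rightarrow> 'a"
  assumes K: "K > 0" and bound: "\<And>m. norm w \<le> K ^ m * norm ((T ^^ m) w)"
    and w: "w \<in> quasinilpotent_part T"
  shows "w = 0"
proof (rule ccontr)
  assume "w \<noteq> 0"
  then have "norm w > 0" by simp
  have "(\<lambda>m. norm w powr (1 / real m) / K) \<longlonglongrightarrow> norm w powr 0 / K"
    by (intro tendsto_divide tendsto_powr tendsto_const lim_1_over_n) (use \<open>norm w > 0\<close> K in auto)
  then have "(\<lambda>m. norm w powr (1 / real m) / K) \<longlonglongrightarrow> 1 / K"
    using \<open>norm w > 0\<close> by simp
  moreover have "(\<lambda>m. norm ((T ^^ m) w) powr (1 / real m)) \<longlonglongrightarrow> 0"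
    using w by (simp add: quasinilpotent_part_def)
  moreover have "eventually (\<lambda>m. norm w powr (1 / real m) / K \<le> norm ((T ^^ m) w) powr (1 / real m)) sequentially"
    using eventually_gt_at_top[of 0]
  proof eventually_elim
    case (elim m)
    have "norm w / K ^ m \<le> norm ((T ^^ m) w)"
      using bound[of m] K by (simp add: divide_le_eq mult.commute)
    then have "(norm w / K ^ m) powr (1 / real m) \<le> norm ((T ^^ m) w) powr (1 / real m)"
      by (intro powr_mono2) (use K in auto)
    then show ?case using K elim by (simp add: powr_divide power_powr_inverse)
  qed
  ultimately have "1 / K \<le> 0" by (intro tendsto_le[OF trivial_limit_sequentially])
  then show False using K by simp
qed

lemma quasinilpotent_partI_kernel:
  fixes S :: "'a::real_normed_vector \<Rightarrow> 'a"
  assumes "linear S" and "(S ^^ k) x = 0"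
  shows "x \<in> quasinilpotent_part S"
proof -
  have zero: "(S ^^ j) 0 = 0" for j
    by (induction j) (simp_all add: linear_0[OF assms(1)])
  have "eventually (\<lambda>m. norm ((S ^^ m) x) powr (1 / real m) = 0) sequentially"
    using eventually_ge_at_top[of k]
  proof eventually_elim
    case (elim m)
    have "(S ^^ m) x = (S ^^ (m - k)) ((S ^^ k) x)"
      using elim by (metis funpow_add comp_apply le_add_diff_inverse2)
    also have "\<dots> = 0" by (simp add: assms(2) zero)
    finally show ?case by simp
  qed
  then show ?thesis unfolding quasinilpotent_part_def by (simp add: tendsto_eventually)
qed

lemma quasinilpotent_part_apply:
  fixes T :: "'a::real_normed_vector \<Rightarrow> 'a"
  assumes "bounded_linear T" and x: "x \<in> quasinilpotent_part T"
  shows "T x \<in> quasinilpotent_part T"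
proof -
  obtain K where K: "K > 0" "\<And>v. norm (T v) \<le> norm v * K"
    using bounded_linear.pos_bounded[OF assms(1)] by blast
  define K' where "K' = max K 1"
  show ?thesis
  proof (rule quasinilpotent_partI_dominated[of K' _ _ T x])
    show "eventually (\<lambda>m. norm ((T ^^ m) (T x)) \<le> K' ^ m * norm ((T ^^ m) x)) sequentially"
      using eventually_gt_at_top[of 0]
    proof eventually_elim
      case (elim m)
      have "norm ((T ^^ m) (T x)) \<le> K * norm ((T ^^ m) x)"
        using K(2) by (simp add: funpow_swap1[symmetric] mult.commute)
      also have "\<dots> \<le> K' ^ m * norm ((T ^^ m) x)"
        using elim power_increasing[of 1 m K'] by (intro mult_right_mono) (auto simp: K'_def)
      finally show ?case .
    qed
  qed (use x in \<open>auto simp: K'_def\<close>)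
qed

lemma quasinilpotent_part_subset_funpow:
  fixes T :: "'a::real_normed_vector \<Rightarrow> 'a"
  assumes "n > 0"
  shows "quasinilpotent_part T \<subseteq> quasinilpotent_part (T ^^ n)"
proof
  fix x assume "x \<in> quasinilpotent_part T"
  define f where "f m = norm ((T ^^ m) x) powr (1 / real m)" for m
  have "(f \<circ> (\<lambda>m. n * m)) \<longlonglongrightarrow> 0"
    using \<open>x \<in> quasinilpotent_part T\<close> assms
    by (intro LIMSEQ_subseq_LIMSEQ) (simp_all add: quasinilpotent_part_def f_def[abs_def] strict_mono_def)
  then have "(\<lambda>m. f (n * m) ^ n) \<longlonglongrightarrow> 0"
    using tendsto_power[of "f \<circ> (\<lambda>m. n * m)" 0 sequentially n] assms by (simp add: comp_def)
  moreover have "eventually (\<lambda>m. f (n * m) ^ n = norm (((T ^^ n) ^^ m) x) powr (1 / real m)) sequentially"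
    using eventually_gt_at_top[of 0]
  proof eventually_elim
    case (elim m)
    have "f (n * m) ^ n = f (n * m) powr (real n)"
      using assms by (simp add: powr_realpow' f_def)
    also have "\<dots> = norm ((T ^^ (n * m)) x) powr (1 / real m)"
      using assms elim by (simp add: f_def powr_powr)
    finally show ?case by (simp add: funpow_mult mult.commute)
  qed
  ultimately have "(\<lambda>m. norm (((T ^^ n) ^^ m) x) powr (1 / real m)) \<longlonglongrightarrow> 0"
    by (rule Lim_transform_eventually)
  then show "x \<in> quasinilpotent_part (T ^^ n)" by (simp add: quasinilpotent_part_def)
qed

lemma quasinilpotent_partI_radius:
  fixes T :: "'a::real_normed_vector \<Rightarrow> 'a"
  assumes "\<delta> > 0"
    and bound: "\<And>r. 0 < r \<Longrightarrow> r < \<delta> \<Longrightarrow> \<exists>K>0. \<forall>m. norm ((T ^^ m) v) \<le> K * r ^ m"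
  shows "v \<in> quasinilpotent_part T"
proof -
  define f where "f m = norm ((T ^^ m) v) powr (1 / real m)" for m
  have "f \<longlonglongrightarrow> 0"
  proof (rule order_tendstoI)
    fix a :: real assume "a < 0"
    then show "eventually (\<lambda>m. a < f m) sequentially"
      unfolding f_def by (simp add: less_le_trans)
  next
    fix e :: real assume "0 < e"
    define r where "r = min (\<delta> / 2) (e / 2)"
    have r: "0 < r" "r < \<delta>" "2 * r \<le> e" using \<open>\<delta> > 0\<close> \<open>0 < e\<close> by (auto simp: r_def)
    obtain K where K: "K > 0" "\<And>m. norm ((T ^^ m) v) \<le> K * r ^ m" using bound[OF r(1) r(2)] by blast
    have "(\<lambda>m. K powr (1 / real m)) \<longlonglongrightarrow> K powr 0"
      by (intro tendsto_powr tendsto_const lim_1_over_n) (use K in simp)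
    then have "eventually (\<lambda>m. K powr (1 / real m) < 2) sequentially"
      using K by (intro order_tendstoD(2)) auto
    then show "eventually (\<lambda>m. f m < e) sequentially"
      using eventually_gt_at_top[of 0]
    proof eventually_elim
      case (elim m)
      have "f m \<le> (K * r ^ m) powr (1 / real m)"
        unfolding f_def using K(2)[of m] by (intro powr_mono2) auto
      also have "\<dots> = K powr (1 / real m) * r" using r elim by (simp add: powr_mult power_powr_inverse)
      also have "\<dots> < 2 * r" using elim r by simp
      finally show ?case using r by simp
    qed
  qed
  then show ?thesis by (simp add: quasinilpotent_part_def f_def[abs_def])
qed

lemma quasinilpotent_part_commuting_factor:
  fixes B T :: "'a::real_normed_vector \<Rightarrow> 'a"
  assumes "bounded_linear B" and BT: "\<And>u. B (T u) = T (B u)"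
    and "x \<in> quasinilpotent_part T"
  shows "x \<in> quasinilpotent_part (\<lambda>u. B (T u))"
proof -
  have power: "((\<lambda>u. B (T u)) ^^ m) u = (B ^^ m) ((T ^^ m) u)" for m u
  proof (induction m arbitrary: u)
    case (Suc m)
    have "((\<lambda>u. B (T u)) ^^ Suc m) u = (B ^^ m) ((T ^^ m) (B (T u)))"
      by (simp only: funpow_Suc_right comp_apply Suc)
    also have "(T ^^ m) (B (T u)) = B ((T ^^ m) (T u))" by (rule funpow_commute) (simp add: BT)
    finally show ?case by (simp add: funpow_swap1)
  qed simp
  obtain K where "K > 0" "\<And>m v. norm ((B ^^ m) v) \<le> K ^ m * norm v"
    using bounded_linear_funpow_bound[OF assms(1)] by blast
  then show ?thesis
    by (intro quasinilpotent_partI_dominated[OF \<open>K > 0\<close> _ assms(3)]) (simp add: power)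
qed

lemma quasinilpotent_part_right_invertible_eq_0:
  fixes D T :: "'a::real_normed_vector \<Rightarrow> 'a"
  assumes "bounded_linear D" and DT: "\<And>u. D (T u) = T (D u)"
    and V: "\<And>u. u \<in> V \<Longrightarrow> D u \<in> V \<and> u = T (D u)"
    and "w \<in> V" and "w \<in> quasinilpotent_part T"
  shows "w = 0"
proof -
  have "(D ^^ m) w \<in> V \<and> w = (T ^^ m) ((D ^^ m) w)" for m
  proof (induction m)
    case (Suc m)
    then have "(D ^^ Suc m) w \<in> V" and "w = (T ^^ m) (T ((D ^^ Suc m) w))"
      using V by simp_all
    then show ?case by (simp add: funpow_swap1)
  qed (simp add: \<open>w \<in> V\<close>)
  moreover have "(T ^^ m) ((D ^^ m) u) = (D ^^ m) ((T ^^ m) u)" for m u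
    by (rule funpow_commute) (simp add: funpow_commute[of D T, OF DT])
  ultimately have inverse: "w = (D ^^ m) ((T ^^ m) w)" for m
    by metis
  obtain K where "K > 0" "\<And>m v. norm ((D ^^ m) v) \<le> K ^ m * norm v"
    using bounded_linear_funpow_bound[OF assms(1)] by blast
  then show ?thesis
    by (intro quasinilpotent_part_bounded_below_eq_0[OF \<open>K > 0\<close> _ assms(5)]) (metis inverse)
qed

section \<open>Normal operators\<close>

lemma norm_adjoint_normal:
  fixes T Ts :: "'a::complex_inner \<Rightarrow> 'a"
  assumes adj: "\<And>x y. cinner (T x) y = cinner x (Ts y)" and normal: "\<And>x. Ts (T x) = T (Ts x)"
  shows "norm (Ts v) = norm (T v)"
proof -
  have "cinner (Ts v) (Ts v) = cinner (T (Ts v)) v" by (simp add: adj)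
  also have "\<dots> = cnj (cinner v (Ts (T v)))" by (simp add: normal cinner_commute[of v])
  also have "cinner v (Ts (T v)) = cinner (T v) (T v)" by (simp add: adj)
  finally have "complex_of_real ((norm (Ts v))\<^sup>2) = complex_of_real ((norm (T v))\<^sup>2)"
    by (simp only: cinner_self_norm complex_cnj_complex_of_real)
  then show ?thesis by (simp only: of_real_eq_iff) (simp add: power2_eq_iff_nonneg)
qed

lemma norm_power2_le_normal:
  fixes T Ts :: "'a::complex_inner \<Rightarrow> 'a"
  assumes adj: "\<And>x y. cinner (T x) y = cinner x (Ts y)" and normal: "\<And>x. Ts (T x) = T (Ts x)"
  shows "(norm (T u))\<^sup>2 \<le> norm u * norm (T (T u))"
proof -
  have "(norm (T u))\<^sup>2 = Re (cinner u (Ts (T u)))" by (simp add: adj[symmetric] cinner_self_norm)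
  also have "\<dots> \<le> norm u * norm (Ts (T u))"
    using complex_Re_le_cmod norm_cinner_le order_trans by blast
  also have "\<dots> = norm u * norm (T (T u))" by (simp add: norm_adjoint_normal[OF adj normal])
  finally show ?thesis .
qed

lemma log_convex_geometric_lower_bound:
  fixes a :: "nat \<Rightarrow> real"
  assumes nonneg: "\<And>k. 0 \<le> a k" and log_convex: "\<And>k. (a (Suc k))\<^sup>2 \<le> a k * a (Suc (Suc k))"
    and "a 0 > 0"
  shows "(a 1 / a 0) ^ m * a 0 \<le> a m"
proof -
  define \<rho> where "\<rho> = a 1 / a 0"
  have step: "\<rho> * a k \<le> a (Suc k)" for k
  proof (induction k)
    case 0 then show ?case using \<open>a 0 > 0\<close> by (simp add: \<rho>_def)
  next
    case (Suc k)
    show ?case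
    proof (cases "a (Suc k) = 0")
      case True then show ?thesis using nonneg by simp
    next
      case False
      then have "a (Suc k) > 0" using nonneg[of "Suc k"] by simp
      then have "0 < a k * a (Suc (Suc k))" using log_convex[of k] by (smt (verit) zero_less_power)
      then have "a k > 0" using nonneg[of k] nonneg[of "Suc (Suc k)"] zero_less_mult_pos2 by fastforce
      have "\<rho> * a (Suc k) \<le> (a (Suc k) / a k) * a (Suc k)"
        using Suc \<open>a k > 0\<close> \<open>a (Suc k) > 0\<close> by (simp add: pos_le_divide_eq)
      also have "\<dots> \<le> a (Suc (Suc k))"
        using log_convex[of k] \<open>a k > 0\<close> by (simp add: power2_eq_square field_simps)
      finally show ?thesis .
    qed
  qed
  have "\<rho> \<ge> 0" using nonneg \<open>a 0 > 0\<close> by (simp add: \<rho>_def)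
  have "\<rho> ^ m * a 0 \<le> a m" for m
  proof (induction m)
    case (Suc m)
    have "\<rho> ^ Suc m * a 0 \<le> \<rho> * a m" using Suc \<open>\<rho> \<ge> 0\<close> by (simp add: mult_left_mono mult.assoc)
    then show ?case using step[of m] by simp
  qed simp
  then show ?thesis by (simp add: \<rho>_def)
qed

lemma quasinilpotent_part_normal_imp_kernel:
  fixes T Ts :: "'a::complex_inner \<Rightarrow> 'a"
  assumes T: "bounded_clinear T"
    and adj: "\<And>x y. cinner (T x) y = cinner x (Ts y)" and normal: "\<And>x. Ts (T x) = T (Ts x)"
    and x: "x \<in> quasinilpotent_part T"
  shows "T x = 0"
proof (rule ccontr)
  assume "T x \<noteq> 0"
  then have "x \<noteq> 0" using clinear_zero[OF T] by auto
  define a where "a k = norm ((T ^^ k) x)" for k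
  have "a 0 > 0" "a 1 > 0" using \<open>x \<noteq> 0\<close> \<open>T x \<noteq> 0\<close> by (simp_all add: a_def)
  have "(a (Suc k))\<^sup>2 \<le> a k * a (Suc (Suc k))" for k
    using norm_power2_le_normal[OF adj normal, of "(T ^^ k) x"] by (simp add: a_def)
  then have "(a 1 / a 0) ^ m * a 0 \<le> a m" for m
    using log_convex_geometric_lower_bound[of a] \<open>a 0 > 0\<close> by (simp add: a_def)
  then have "norm x \<le> (a 0 / a 1) ^ m * norm ((T ^^ m) x)" for m
    using \<open>a 0 > 0\<close> \<open>a 1 > 0\<close> by (simp add: a_def power_divide field_simps)
  moreover have "a 0 / a 1 > 0" using \<open>a 0 > 0\<close> \<open>a 1 > 0\<close> by simp
  ultimately have "x = 0"
    by (intro quasinilpotent_part_bounded_below_eq_0[OF _ _ x, of "a 0 / a 1"])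
  with \<open>x \<noteq> 0\<close> show False ..
qed

lemma normal_shift_op:
  fixes N Ns :: "'a::complex_inner \<Rightarrow> 'a"
  assumes N: "bounded_clinear N" and Ns: "bounded_clinear Ns" and normal: "\<And>u. Ns (N u) = N (Ns u)"
  shows "shift_op Ns (cnj \<mu>) (shift_op N \<mu> u) = shift_op N \<mu> (shift_op Ns (cnj \<mu>) u)"
  by (simp add: shift_op_def clinear_diff[OF N] clinear_scaleC[OF N] clinear_diff[OF Ns]
      clinear_scaleC[OF Ns] normal scaleC_diff_right algebra_simps mult.commute)

section \<open>Operators with a normal power\<close>

text \<open>Horner schemes for the quotients pow_quot A l k = (A^k - l^k) / (A - l)
  and pow_quot2 A l k = (pow_quot A l k - k l^(k-1)) / (A - l).\<close>

fun pow_quot :: "('a::complex_vector \<Rightarrow> 'a) \<Rightarrow> complex \<Rightarrow> nat \<Rightarrow> 'a \<Rightarrow> 'a" where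
  "pow_quot A l 0 u = 0"
| "pow_quot A l (Suc k) u = l ^ k *\<^sub>C u + A (pow_quot A l k u)"

fun pow_quot2 :: "('a::complex_vector \<Rightarrow> 'a) \<Rightarrow> complex \<Rightarrow> nat \<Rightarrow> 'a \<Rightarrow> 'a" where
  "pow_quot2 A l 0 u = 0"
| "pow_quot2 A l (Suc k) u = (of_nat k * l ^ (k - 1)) *\<^sub>C u + A (pow_quot2 A l k u)"

lemma shift_op_commute:
  assumes "bounded_clinear C" and "\<And>u. C (A u) = A (C u)"
  shows "C (shift_op A l u) = shift_op A l (C u)"
  by (simp add: shift_op_def clinear_diff[OF assms(1)] clinear_scaleC[OF assms(1)] assms(2))

context
  fixes A :: "'a::complex_inner \<Rightarrow> 'a"
  assumes A: "bounded_clinear A"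
begin

lemma bounded_clinear_pow_quot: "bounded_clinear (pow_quot A l k)"
  by (induction k)
    (simp_all add: bounded_clinear_zero bounded_clinear_add bounded_clinear_scaleC[OF bounded_clinear_ident]
      bounded_clinear_compose[OF A] flip: fun_eq_iff)

lemma bounded_clinear_pow_quot2: "bounded_clinear (pow_quot2 A l k)"
  by (induction k)
    (simp_all add: bounded_clinear_zero bounded_clinear_add bounded_clinear_scaleC[OF bounded_clinear_ident]
      bounded_clinear_compose[OF A] flip: fun_eq_iff)

lemma pow_quot_commute:
  assumes C: "bounded_clinear C" and "\<And>u. C (A u) = A (C u)"
  shows "C (pow_quot A l k u) = pow_quot A l k (C u)"
  by (induction k) (simp_all add: clinear_add[OF C] clinear_scaleC[OF C] clinear_zero[OF C] assms(2))

lemma pow_quot2_commute: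
  assumes C: "bounded_clinear C" and "\<And>u. C (A u) = A (C u)"
  shows "C (pow_quot2 A l k u) = pow_quot2 A l k (C u)"
  by (induction k) (simp_all add: clinear_add[OF C] clinear_scaleC[OF C] clinear_zero[OF C] assms(2))

lemma shift_op_pow_quot: "shift_op A l (pow_quot A l k u) = (A ^^ k) u - l ^ k *\<^sub>C u"
proof (induction k)
  case (Suc k)
  have "(A ^^ k) u = A (pow_quot A l k u) - l *\<^sub>C pow_quot A l k u + l ^ k *\<^sub>C u"
    using Suc by (simp add: shift_op_def algebra_simps)
  then have "(A ^^ Suc k) u = A (A (pow_quot A l k u)) - l *\<^sub>C A (pow_quot A l k u) + l ^ k *\<^sub>C A u"
    by (simp add: clinear_add[OF A] clinear_diff[OF A] clinear_scaleC[OF A])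
  then show ?case
    by (simp add: shift_op_def clinear_add[OF A] clinear_scaleC[OF A] scaleC_add_right algebra_simps)
qed (simp add: shift_op_def clinear_zero[OF A])

lemma pow_quot_eq_shift_op_pow_quot2: "pow_quot A l k u = (of_nat k * l ^ (k - 1)) *\<^sub>C u + shift_op A l (pow_quot2 A l k u)"
proof (induction k)
  case (Suc k)
  define c where "c = of_nat k * l ^ (k - 1)"
  have "l * c = of_nat k * l ^ k" by (cases k) (simp_all add: c_def mult_ac)
  then have "(of_nat (Suc k) * l ^ k) *\<^sub>C u + shift_op A l (c *\<^sub>C u + A (pow_quot2 A l k u))
      = l ^ k *\<^sub>C u + c *\<^sub>C A u + shift_op A l (A (pow_quot2 A l k u))"
    by (simp add: shift_op_def clinear_add[OF A] clinear_scaleC[OF A] scaleC_add_right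
        algebra_simps flip: scaleC_add_left)
  moreover have "pow_quot A l (Suc k) u = l ^ k *\<^sub>C u + c *\<^sub>C A u + shift_op A l (A (pow_quot2 A l k u))"
    using Suc by (simp add: c_def clinear_add[OF A] clinear_scaleC[OF A] shift_op_commute[OF A])
  ultimately show ?case by (simp add: c_def)
qed (simp add: shift_op_def clinear_zero[OF A])

lemma pow_quot_shift_op: "pow_quot A l k (shift_op A l u) = shift_op (A ^^ k) (l ^ k) u"
proof -
  have "pow_quot A l k (shift_op A l u) = shift_op A l (pow_quot A l k u)"
    by (rule pow_quot_commute[OF bounded_clinear_shift_op[OF A], symmetric]) (simp add: shift_op_commute[OF A])
  also have "\<dots> = (A ^^ k) u - l ^ k *\<^sub>C u" by (rule shift_op_pow_quot)
  finally show ?thesis by (simp add: shift_op_def)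
qed

lemma pow_quot_eq_0_imp:
  assumes "l \<noteq> 0" and "k > 0" and "pow_quot A l k u = 0"
  shows "u = shift_op A l ((- 1 / (of_nat k * l ^ (k - 1))) *\<^sub>C pow_quot2 A l k u)"
proof -
  have T: "bounded_clinear (shift_op A l)" by (rule bounded_clinear_shift_op[OF A])
  define c where "c = of_nat k * l ^ (k - 1)"
  have "c \<noteq> 0" using assms(1,2) by (simp add: c_def)
  have "c *\<^sub>C u = - shift_op A l (pow_quot2 A l k u)"
    using assms(3) pow_quot_eq_shift_op_pow_quot2[of l k u] by (simp add: c_def eq_neg_iff_add_eq_0)
  then have "(1 / c) *\<^sub>C (c *\<^sub>C u) = (1 / c) *\<^sub>C (- shift_op A l (pow_quot2 A l k u))" by simp
  then have "u = shift_op A l ((- 1 / c) *\<^sub>C pow_quot2 A l k u)"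
    using \<open>c \<noteq> 0\<close> by (simp add: clinear_scaleC[OF T] clinear_minus[OF T] scaleC_minus_right scaleC_minus_left)
  then show ?thesis by (simp add: c_def)
qed

end

context
  fixes A Astar :: "'a::complex_inner \<Rightarrow> 'a" and n :: nat
  assumes A: "bounded_clinear A"
    and adj: "\<And>x y. cinner (A x) y = cinner x (Astar y)"
    and "n > 0"
    and commute: "\<And>x. Astar ((A ^^ n) x) = (A ^^ n) (Astar x)"
begin

lemma normal_shift_op_power:
  "shift_op (Astar ^^ n) (cnj \<mu>) (shift_op (A ^^ n) \<mu> u) = shift_op (A ^^ n) \<mu> (shift_op (Astar ^^ n) (cnj \<mu>) u)"
proof (rule normal_shift_op)
  show "(Astar ^^ n) ((A ^^ n) u) = (A ^^ n) ((Astar ^^ n) u)" for u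
    by (rule funpow_commute) (rule commute)
qed (simp_all add: bounded_clinear_funpow A bounded_clinear_adjoint[OF A adj])

lemma quasinilpotent_part_shift_power_imp_kernel:
  assumes "x \<in> quasinilpotent_part (shift_op (A ^^ n) \<mu>)"
  shows "shift_op (A ^^ n) \<mu> x = 0"
  by (rule quasinilpotent_part_normal_imp_kernel[OF bounded_clinear_shift_op[OF bounded_clinear_funpow[OF A]]
        cinner_shift_op_adjoint[OF cinner_funpow_adjoint[OF adj]] normal_shift_op_power assms])

lemma quasinilpotent_part_eq_kernel_power: "quasinilpotent_part A = op_kernel (A ^^ n)"
proof
  show "quasinilpotent_part A \<subseteq> op_kernel (A ^^ n)"
  proof
    fix x assume "x \<in> quasinilpotent_part A"
    then have "x \<in> quasinilpotent_part (shift_op (A ^^ n) 0)"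
      using quasinilpotent_part_subset_funpow[OF \<open>n > 0\<close>] by (auto simp: shift_op_def)
    then have "shift_op (A ^^ n) 0 x = 0" by (rule quasinilpotent_part_shift_power_imp_kernel)
    then show "x \<in> op_kernel (A ^^ n)" by (simp add: shift_op_def op_kernel_def)
  qed
  show "op_kernel (A ^^ n) \<subseteq> quasinilpotent_part A"
    using A by (auto simp: op_kernel_def bounded_clinear_def bounded_linear.linear intro: quasinilpotent_partI_kernel)
qed

lemma quasinilpotent_part_shift_eq_kernel:
  assumes "l \<noteq> 0"
  shows "quasinilpotent_part (shift_op A l) = op_kernel (shift_op A l)"
proof
  define T where "T = shift_op A l"
  have T: "bounded_clinear T" by (simp add: T_def bounded_clinear_shift_op[OF A])
  then show "op_kernel (shift_op A l) \<subseteq> quasinilpotent_part (shift_op A l)"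
    using quasinilpotent_partI_kernel[of T 1]
    by (auto simp: op_kernel_def T_def bounded_clinear_def bounded_linear.linear)
  show "quasinilpotent_part (shift_op A l) \<subseteq> op_kernel (shift_op A l)"
  proof
    fix x assume "x \<in> quasinilpotent_part (shift_op A l)"
    then have x: "x \<in> quasinilpotent_part T" by (simp add: T_def)
    define B C where "B = pow_quot A l n" and "C = pow_quot2 A l n"
    define D where "D u = (- 1 / (of_nat n * l ^ (n - 1))) *\<^sub>C C u" for u
    have B: "bounded_clinear B" and C: "bounded_clinear C"
      by (simp_all add: B_def C_def bounded_clinear_pow_quot bounded_clinear_pow_quot2 A)
    have TA: "T (A u) = A (T u)" for u by (simp add: T_def shift_op_commute[OF A])
    have BT: "B (T u) = T (B u)" for u by (simp add: B_def pow_quot_commute[OF A T TA])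
    have BC: "B (C u) = C (B u)" for u
      unfolding B_def C_def
      by (rule pow_quot_commute[OF A bounded_clinear_pow_quot2[OF A], symmetric])
        (simp add: pow_quot2_commute[OF A A])
    have "x \<in> quasinilpotent_part (shift_op (A ^^ n) (l ^ n))"
      using quasinilpotent_part_commuting_factor[OF bounded_clinear_bounded_linear[OF B] BT x]
      by (simp add: B_def T_def pow_quot_shift_op[OF A])
    then have "B (T x) = 0"
      using quasinilpotent_part_shift_power_imp_kernel by (simp add: B_def T_def pow_quot_shift_op[OF A])
    have "T x = 0"
    proof (rule quasinilpotent_part_right_invertible_eq_0[of D T "op_kernel B"])
      show "bounded_linear D"
        unfolding D_def by (rule bounded_clinear_bounded_linear[OF bounded_clinear_scaleC[OF C]])
      show "D (T u) = T (D u)" for u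
        by (simp add: D_def C_def pow_quot2_commute[OF A T TA] clinear_scaleC[OF T])
      show "D u \<in> op_kernel B \<and> u = T (D u)" if "u \<in> op_kernel B" for u
        using that pow_quot_eq_0_imp[OF A \<open>l \<noteq> 0\<close> \<open>n > 0\<close>, of u]
        by (simp add: op_kernel_def D_def clinear_scaleC[OF B] BC clinear_zero[OF C])
          (simp add: B_def C_def T_def)
      show "T x \<in> op_kernel B" using \<open>B (T x) = 0\<close> by (simp add: op_kernel_def)
      show "T x \<in> quasinilpotent_part T" by (rule quasinilpotent_part_apply[OF bounded_clinear_bounded_linear[OF T] x])
    qed
    then show "x \<in> op_kernel (shift_op A l)" by (simp add: T_def op_kernel_def)
  qed
qed

end

section \<open>The resolvent\<close>

definition resolvent :: "('a::{complex_vector,real_normed_vector} \<Rightarrow> 'a) \<Rightarrow> complex \<Rightarrow> 'a \<Rightarrow> 'a" where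
  "resolvent A z = (SOME B. bounded_clinear B \<and> B \<circ> shift_op A z = id \<and> shift_op A z \<circ> B = id)"

lemma
  assumes "z \<notin> op_spectrum A"
  shows bounded_clinear_resolvent: "bounded_clinear (resolvent A z)"
    and resolvent_shift_op: "resolvent A z (shift_op A z u) = u"
    and shift_op_resolvent: "shift_op A z (resolvent A z u) = u"
proof -
  have "\<exists>B. bounded_clinear B \<and> B \<circ> shift_op A z = id \<and> shift_op A z \<circ> B = id"
    using assms unfolding op_spectrum_def by blast
  then have "bounded_clinear (resolvent A z) \<and> resolvent A z \<circ> shift_op A z = id \<and> shift_op A z \<circ> resolvent A z = id"
    unfolding resolvent_def by (rule someI_ex)
  then show "bounded_clinear (resolvent A z)" "resolvent A z (shift_op A z u) = u"
    "shift_op A z (resolvent A z u) = u"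
    by (auto simp: fun_eq_iff)
qed

context
  fixes A :: "'a::{complex_inner, complete_space} \<Rightarrow> 'a"
  assumes A: "bounded_clinear A"
begin

lemma shift_op_surj_near_resolvent_set:
  assumes z0: "z0 \<notin> op_spectrum A" and R: "\<And>u. norm (resolvent A z0 u) \<le> M * norm u"
    and "0 \<le> M" and small: "cmod (z - z0) * M < 1"
  shows "\<exists>u. shift_op A z u = b"
proof -
  define R where "R = resolvent A z0"
  have "bounded_clinear R" unfolding R_def by (rule bounded_clinear_resolvent[OF z0])
  define \<Phi> where "\<Phi> u = R b + (z - z0) *\<^sub>C R u" for u
  have "\<exists>!u. \<Phi> u = u"
  proof (rule banach_fix_type)
    show "0 \<le> cmod (z - z0) * M" using \<open>0 \<le> M\<close> by simp
    show "\<forall>x y. dist (\<Phi> x) (\<Phi> y) \<le> (cmod (z - z0) * M) * dist x y"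
    proof (intro allI)
      fix x y
      have "\<Phi> x - \<Phi> y = (z - z0) *\<^sub>C R (x - y)"
        by (simp add: \<Phi>_def clinear_diff[OF \<open>bounded_clinear R\<close>] scaleC_diff_right)
      then have "dist (\<Phi> x) (\<Phi> y) = cmod (z - z0) * norm (R (x - y))"
        by (simp add: dist_norm norm_scaleC)
      also have "\<dots> \<le> cmod (z - z0) * (M * norm (x - y))"
        using R by (simp add: mult_left_mono R_def)
      finally show "dist (\<Phi> x) (\<Phi> y) \<le> (cmod (z - z0) * M) * dist x y" by (simp add: dist_norm mult_ac)
    qed
  qed (rule small)
  then obtain u where "\<Phi> u = u" by blast
  have T0: "bounded_clinear (shift_op A z0)" by (rule bounded_clinear_shift_op[OF A])
  have "shift_op A z0 u = shift_op A z0 (\<Phi> u)" using \<open>\<Phi> u = u\<close> by simp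
  also have "\<dots> = b + (z - z0) *\<^sub>C u"
    by (simp add: \<Phi>_def R_def clinear_add[OF T0] clinear_scaleC[OF T0] shift_op_resolvent[OF z0])
  finally have "shift_op A z u = b" by (simp add: shift_op_def scaleC_diff_left)
  then show ?thesis ..
qed

lemma shift_op_bounded_below_near_resolvent_set:
  assumes z0: "z0 \<notin> op_spectrum A" and R: "\<And>u. norm (resolvent A z0 u) \<le> M * norm u"
    and small: "cmod (z - z0) * M < 1"
  shows "norm u \<le> M / (1 - cmod (z - z0) * M) * norm (shift_op A z u)"
proof -
  have R0: "bounded_clinear (resolvent A z0)" by (rule bounded_clinear_resolvent[OF z0])
  have "u = resolvent A z0 (shift_op A z0 u)" by (simp add: resolvent_shift_op[OF z0])
  also have "shift_op A z0 u = shift_op A z u + (z - z0) *\<^sub>C u"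
    by (simp add: shift_op_def scaleC_diff_left)
  finally have "u = resolvent A z0 (shift_op A z u) + (z - z0) *\<^sub>C resolvent A z0 u"
    by (simp add: clinear_add[OF R0] clinear_scaleC[OF R0])
  then have "norm u \<le> norm (resolvent A z0 (shift_op A z u)) + cmod (z - z0) * norm (resolvent A z0 u)"
    by (metis norm_scaleC norm_triangle_ineq)
  also have "\<dots> \<le> M * norm (shift_op A z u) + cmod (z - z0) * (M * norm u)"
    using R by (intro add_mono mult_left_mono) auto
  finally have "(1 - cmod (z - z0) * M) * norm u \<le> M * norm (shift_op A z u)"
    by (simp add: algebra_simps)
  then show ?thesis using small by (simp add: field_simps)
qed

lemma resolvent_set_near:
  assumes z0: "z0 \<notin> op_spectrum A" and "M > 0" and R: "\<And>u. norm (resolvent A z0 u) \<le> M * norm u"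
    and small: "cmod (z - z0) * M < 1"
  shows "z \<notin> op_spectrum A" and "norm (resolvent A z u) \<le> M / (1 - cmod (z - z0) * M) * norm u"
proof -
  have "\<exists>u. shift_op A z u = b" for b
    using shift_op_surj_near_resolvent_set[OF z0 R _ small] \<open>M > 0\<close> by simp
  then have "\<exists>B. bounded_clinear B \<and> B \<circ> shift_op A z = id \<and> shift_op A z \<circ> B = id"
    by (rule bounded_clinear_inverseI[OF bounded_clinear_shift_op[OF A] _
          shift_op_bounded_below_near_resolvent_set[OF z0 R small]])
  then show "z \<notin> op_spectrum A" unfolding op_spectrum_def by blast
  then show "norm (resolvent A z u) \<le> M / (1 - cmod (z - z0) * M) * norm u"
    using shift_op_bounded_below_near_resolvent_set[OF z0 R small, of "resolvent A z u"]
    by (simp add: shift_op_resolvent)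
qed

lemma resolvent_local_bound:
  assumes z0: "z0 \<notin> op_spectrum A"
  shows "\<exists>r C. r > 0 \<and> C > 0 \<and> ball z0 r \<subseteq> - op_spectrum A \<and>
    (\<forall>z\<in>ball z0 r. \<forall>u. norm (resolvent A z u) \<le> C * norm u)"
proof -
  obtain M where M: "M > 0" "\<And>u. norm (resolvent A z0 u) \<le> M * norm u"
    using bounded_clinear_pos_bound[OF bounded_clinear_resolvent[OF z0]] by blast
  have "z \<notin> op_spectrum A \<and> (\<forall>u. norm (resolvent A z u) \<le> (2 * M) * norm u)"
    if "z \<in> ball z0 (1 / (2 * M))" for z
  proof -
    have small: "cmod (z - z0) * M < 1 / 2"
      using that M by (simp add: dist_norm norm_minus_commute field_simps)
    then have "cmod (z - z0) * M < 1" by simp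
    have "norm (resolvent A z u) \<le> (2 * M) * norm u" for u
    proof -
      have "norm (resolvent A z u) \<le> M / (1 - cmod (z - z0) * M) * norm u"
        by (rule resolvent_set_near(2)[OF z0 M \<open>cmod (z - z0) * M < 1\<close>])
      also have "\<dots> \<le> (2 * M) * norm u"
        using small M by (intro mult_right_mono) (simp_all add: field_simps)
      finally show ?thesis .
    qed
    then show ?thesis using resolvent_set_near(1)[OF z0 M \<open>cmod (z - z0) * M < 1\<close>] by blast
  qed
  then show ?thesis using M by (intro exI[of _ "1 / (2 * M)"] exI[of _ "2 * M"]) auto
qed

lemma open_resolvent_set: "open (- op_spectrum A)"
proof (rule openI)
  fix z0 assume "z0 \<in> - op_spectrum A"
  then show "\<exists>e>0. ball z0 e \<subseteq> - op_spectrum A" using resolvent_local_bound by blast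
qed

lemma resolvent_identity:
  assumes z: "z \<notin> op_spectrum A" and w: "w \<notin> op_spectrum A"
  shows "resolvent A w u - resolvent A z u = (w - z) *\<^sub>C resolvent A w (resolvent A z u)"
proof -
  have Rw: "bounded_clinear (resolvent A w)" by (rule bounded_clinear_resolvent[OF w])
  define v where "v = resolvent A z u"
  have "resolvent A w u - resolvent A z u = resolvent A w (shift_op A z v) - resolvent A w (shift_op A w v)"
    by (simp add: v_def shift_op_resolvent[OF z] resolvent_shift_op[OF w])
  also have "\<dots> = resolvent A w (shift_op A z v - shift_op A w v)" by (simp add: clinear_diff[OF Rw])
  also have "shift_op A z v - shift_op A w v = (w - z) *\<^sub>C v" by (simp add: shift_op_def scaleC_diff_left)
  finally show ?thesis by (simp add: clinear_scaleC[OF Rw] v_def)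
qed

lemma resolvent_tendsto:
  assumes z0: "z0 \<notin> op_spectrum A"
  shows "((\<lambda>w. resolvent A w v) \<longlongrightarrow> resolvent A z0 v) (at z0)"
proof -
  obtain r C where rC: "r > 0" "ball z0 r \<subseteq> - op_spectrum A"
    "\<And>z u. z \<in> ball z0 r \<Longrightarrow> norm (resolvent A z u) \<le> C * norm u"
    using resolvent_local_bound[OF z0] by blast
  have "eventually (\<lambda>w. norm (resolvent A w v - resolvent A z0 v)
      \<le> cmod (w - z0) * (C * norm (resolvent A z0 v))) (at z0)"
    unfolding eventually_at
  proof (intro exI[of _ r] conjI ballI impI)
    fix w assume "w \<noteq> z0 \<and> dist w z0 < r"
    then have w: "w \<in> ball z0 r" by (simp add: dist_commute)
    then have "resolvent A w v - resolvent A z0 v = (w - z0) *\<^sub>C resolvent A w (resolvent A z0 v)"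
      using resolvent_identity[OF z0] rC(2) by blast
    then show "norm (resolvent A w v - resolvent A z0 v) \<le> cmod (w - z0) * (C * norm (resolvent A z0 v))"
      using rC(3)[OF w] by (simp add: norm_scaleC mult_left_mono)
  qed (rule rC(1))
  moreover have "((\<lambda>w. cmod (w - z0) * (C * norm (resolvent A z0 v))) \<longlongrightarrow> 0) (at z0)"
    by (auto intro!: tendsto_eq_intros)
  ultimately have "((\<lambda>w. resolvent A w v - resolvent A z0 v) \<longlongrightarrow> 0) (at z0)"
    by (rule Lim_null_comparison)
  then show ?thesis by (rule LIM_zero_cancel)
qed

lemma has_field_derivative_cinner_resolvent:
  assumes z0: "z0 \<notin> op_spectrum A"
  shows "((\<lambda>z. cinner y (resolvent A z x)) has_field_derivative
    cinner y (resolvent A z0 (resolvent A z0 x))) (at z0)"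
proof -
  obtain r where r: "r > 0" "ball z0 r \<subseteq> - op_spectrum A"
    using resolvent_local_bound[OF z0] by blast
  have "((\<lambda>w. cinner y (resolvent A w (resolvent A z0 x))) \<longlongrightarrow> cinner y (resolvent A z0 (resolvent A z0 x))) (at z0)"
    by (rule bounded_linear.tendsto[OF bounded_linear_cinner_right resolvent_tendsto[OF z0]])
  then show ?thesis unfolding has_field_derivative_iff
  proof (rule Lim_transform_within[OF _ r(1)])
    fix w assume w: "0 < dist w z0" "dist w z0 < r"
    then have "w \<in> ball z0 r" by (simp add: dist_commute)
    then have "w \<notin> op_spectrum A" using r(2) by blast
    then have "cinner y (resolvent A w x) - cinner y (resolvent A z0 x)
        = (w - z0) * cinner y (resolvent A w (resolvent A z0 x))"
      by (simp only: resolvent_identity[OF z0 \<open>w \<notin> op_spectrum A\<close>] cinner_scaleC_right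
          flip: cinner_diff_right)
    then show "cinner y (resolvent A w (resolvent A z0 x))
        = (cinner y (resolvent A w x) - cinner y (resolvent A z0 x)) / (w - z0)"
      using w by simp
  qed
qed

lemma holomorphic_on_cinner_resolvent: "(\<lambda>z. cinner y (resolvent A z x)) holomorphic_on (- op_spectrum A)"
  using has_field_derivative_cinner_resolvent by (auto simp: holomorphic_on_open[OF open_resolvent_set])

lemma resolvent_compact_bound:
  assumes "compact K" "K \<subseteq> - op_spectrum A"
  obtains C where "C > 0" "\<And>z u. z \<in> K \<Longrightarrow> norm (resolvent A z u) \<le> C * norm u"
proof -
  have "\<exists>r C. r > 0 \<and> C > 0 \<and> (\<forall>z\<in>ball z0 r. \<forall>u. norm (resolvent A z u) \<le> C * norm u)"
    if "z0 \<in> K" for z0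
    using resolvent_local_bound[of z0] that assms(2) by blast
  then obtain r C where rC: "\<And>z0. z0 \<in> K \<Longrightarrow> r z0 > 0 \<and> C z0 > 0 \<and>
      (\<forall>z\<in>ball z0 (r z0). \<forall>u. norm (resolvent A z u) \<le> C z0 * norm u)"
    by metis
  obtain D where D: "D \<subseteq> K" "finite D" "K \<subseteq> (\<Union>z0\<in>D. ball z0 (r z0))"
    by (rule compactE_image[OF assms(1), of K "\<lambda>z0. ball z0 (r z0)"]) (use rC in force)+
  have C_le: "C z0 \<le> 1 + sum C D" if "z0 \<in> D" for z0
    using member_le_sum[OF that, of C] rC D(1,2) by (fastforce intro: less_imp_le)
  show ?thesis
  proof (rule that)
    show "1 + sum C D > 0" using sum_nonneg[of D C] rC D(1) by (fastforce intro: less_imp_le)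
    fix z u assume "z \<in> K"
    then obtain z0 where "z0 \<in> D" "z \<in> ball z0 (r z0)" using D(3) by blast
    then have "norm (resolvent A z u) \<le> C z0 * norm u" using rC D(1) by blast
    also have "\<dots> \<le> (1 + sum C D) * norm u" by (intro mult_right_mono C_le \<open>z0 \<in> D\<close>) simp
    finally show "norm (resolvent A z u) \<le> (1 + sum C D) * norm u" .
  qed
qed

end

section \<open>Ascent and descent\<close>

lemma op_kernel_funpow_stable:
  fixes T :: "'a::zero \<Rightarrow> 'a"
  assumes "T 0 = 0" and stable: "op_kernel (T ^^ q) = op_kernel (T ^^ Suc q)"
  shows "op_kernel (T ^^ (q + j)) = op_kernel (T ^^ q)"
proof (induction j)
  case (Suc j)
  have "op_kernel (T ^^ (q + Suc j)) \<subseteq> op_kernel (T ^^ (q + j))"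
  proof
    fix x assume "x \<in> op_kernel (T ^^ (q + Suc j))"
    then have "(T ^^ j) x \<in> op_kernel (T ^^ Suc q)"
      by (simp add: op_kernel_def funpow_add)
    then have "(T ^^ j) x \<in> op_kernel (T ^^ q)" by (simp only: stable)
    then show "x \<in> op_kernel (T ^^ (q + j))" by (simp add: op_kernel_def funpow_add)
  qed
  moreover have "op_kernel (T ^^ (q + j)) \<subseteq> op_kernel (T ^^ (q + Suc j))"
    using assms(1) by (auto simp: op_kernel_def)
  ultimately show ?case using Suc by blast
qed simp

lemma range_funpow_stable:
  fixes T :: "'a \<Rightarrow> 'a"
  assumes stable: "range (T ^^ q) = range (T ^^ Suc q)"
  shows "range (T ^^ (q + j)) = range (T ^^ q)"
proof (induction j)
  case (Suc j)
  have "range (T ^^ (q + Suc j)) = (T ^^ j) ` range (T ^^ Suc q)"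
    by (simp only: image_comp funpow_add[symmetric] add_Suc_right add.commute)
  also have "\<dots> = (T ^^ j) ` range (T ^^ q)" by (simp only: flip: stable)
  also have "\<dots> = range (T ^^ (q + j))"
    by (simp only: image_comp funpow_add[symmetric] add.commute)
  finally show ?case using Suc by simp
qed simp

lemma range_funpow_stable_if_kernel_stable:
  fixes T :: "'a::real_vector \<Rightarrow> 'a"
  assumes "linear T"
    and ker_a: "op_kernel (T ^^ a) = op_kernel (T ^^ Suc a)" and range_d: "range (T ^^ d) = range (T ^^ Suc d)"
  shows "range (T ^^ a) = range (T ^^ Suc a)"
proof
  have diff: "(T ^^ k) (x - y) = (T ^^ k) x - (T ^^ k) y" for k x y
    by (induction k) (simp_all add: linear_diff[OF assms(1)])
  show "range (T ^^ a) \<subseteq> range (T ^^ Suc a)"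
  proof
    fix y assume "y \<in> range (T ^^ a)"
    then obtain x where y: "y = (T ^^ a) x" by blast
    have "range (T ^^ (a + d)) = range (T ^^ Suc (a + d))"
      using range_funpow_stable[OF range_d, of a] range_funpow_stable[OF range_d, of "Suc a"]
      by (simp add: ac_simps)
    then have "(T ^^ (a + d)) x \<in> range (T ^^ Suc (a + d))" by blast
    then obtain z where "(T ^^ (a + d)) x = (T ^^ (a + d) \<circ> T) z" unfolding funpow_Suc_right by blast
    then have "x - T z \<in> op_kernel (T ^^ (a + d))" by (simp add: op_kernel_def diff)
    also have "op_kernel (T ^^ (a + d)) = op_kernel (T ^^ a)"
      by (rule op_kernel_funpow_stable[OF linear_0[OF assms(1)] ker_a])
    finally have "y = (T ^^ a \<circ> T) z" by (simp add: y op_kernel_def diff)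
    then show "y \<in> range (T ^^ Suc a)" unfolding funpow_Suc_right by blast
  qed
  show "range (T ^^ Suc a) \<subseteq> range (T ^^ a)"
    by (auto simp: funpow_Suc_right simp del: funpow.simps)
qed

lemma kernel_funpow_stable_if_range_stable:
  fixes T :: "'a::zero \<Rightarrow> 'a"
  assumes "T 0 = 0"
    and ker_a: "op_kernel (T ^^ a) = op_kernel (T ^^ Suc a)" and range_d: "range (T ^^ d) = range (T ^^ Suc d)"
  shows "op_kernel (T ^^ d) = op_kernel (T ^^ Suc d)"
proof
  show "op_kernel (T ^^ Suc d) \<subseteq> op_kernel (T ^^ d)"
  proof
    fix x assume x: "x \<in> op_kernel (T ^^ Suc d)"
    have "(T ^^ d) x \<in> range (T ^^ (d + a))" using range_funpow_stable[OF range_d, of a] by auto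
    then obtain z where z: "(T ^^ d) x = (T ^^ (d + a)) z" by auto
    then have "z \<in> op_kernel (T ^^ Suc (d + a))" using x by (simp add: op_kernel_def)
    also have "op_kernel (T ^^ Suc (d + a)) = op_kernel (T ^^ (d + a))"
      using op_kernel_funpow_stable[OF assms(1) ker_a, of "Suc d"]
        op_kernel_funpow_stable[OF assms(1) ker_a, of d] by (simp add: ac_simps)
    finally show "x \<in> op_kernel (T ^^ d)" by (simp add: z op_kernel_def)
  qed
  show "op_kernel (T ^^ d) \<subseteq> op_kernel (T ^^ Suc d)"
    using assms(1) by (auto simp: op_kernel_def)
qed

lemma ascent_eq_descent:
  fixes T :: "'a::real_vector \<Rightarrow> 'a"
  assumes "linear T"
    and "op_kernel (T ^^ p) = op_kernel (T ^^ Suc p)" and "range (T ^^ p) = range (T ^^ Suc p)"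
  shows "\<exists>q. is_ascent T q \<and> is_descent T q"
proof -
  define a where "a = (LEAST q. op_kernel (T ^^ q) = op_kernel (T ^^ Suc q))"
  define d where "d = (LEAST q. range (T ^^ q) = range (T ^^ Suc q))"
  have ker_a: "op_kernel (T ^^ a) = op_kernel (T ^^ Suc a)"
    unfolding a_def by (rule LeastI[of _ p]) (rule assms(2))
  have range_d: "range (T ^^ d) = range (T ^^ Suc d)"
    unfolding d_def by (rule LeastI[of _ p]) (rule assms(3))
  have "d \<le> a"
    unfolding d_def by (rule Least_le) (rule range_funpow_stable_if_kernel_stable[OF assms(1) ker_a range_d])
  moreover have "a \<le> d"
    unfolding a_def by (rule Least_le)
      (rule kernel_funpow_stable_if_range_stable[OF linear_0[OF assms(1)] ker_a range_d])
  moreover have "is_ascent T a"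
    unfolding is_ascent_def using ker_a not_less_Least[of _ "\<lambda>q. op_kernel (T ^^ q) = op_kernel (T ^^ Suc q)"]
    by (auto simp: a_def)
  moreover have "is_descent T d"
    unfolding is_descent_def using range_d not_less_Least[of _ "\<lambda>q. range (T ^^ q) = range (T ^^ Suc q)"]
    by (auto simp: d_def)
  ultimately show ?thesis by (metis antisym)
qed

lemma kernel_range_stable_if_inverse_modulo:
  fixes T S P :: "'a::real_vector \<Rightarrow> 'a"
  assumes "linear T" and "linear S"
    and ST: "\<And>x. S (T x) = x - P x" and TS: "\<And>x. T (S x) = x - P x"
    and TP: "\<And>x. (T ^^ p) (P x) = 0"
  shows "op_kernel (T ^^ p) = op_kernel (T ^^ Suc p)" and "range (T ^^ p) = range (T ^^ Suc p)"
proof -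
  have add: "(T ^^ p) (x + y) = (T ^^ p) x + (T ^^ p) y" for x y
    by (induction p) (simp_all add: linear_add[OF assms(1)])
  have kernel: "(T ^^ p) x = S ((T ^^ Suc p) x)" for x
  proof -
    have "(T ^^ p) x = (T ^^ p) (S (T x) + P x)" by (simp add: ST)
    also have "\<dots> = (T ^^ p) (S (T x))" by (simp add: add TP)
    also have "\<dots> = S ((T ^^ p) (T x))" by (rule funpow_commute) (simp only: ST TS)
    finally show ?thesis by (simp only: funpow_Suc_right comp_apply)
  qed
  show "op_kernel (T ^^ p) = op_kernel (T ^^ Suc p)"
  proof
    show "op_kernel (T ^^ p) \<subseteq> op_kernel (T ^^ Suc p)"
      using linear_0[OF assms(1)] by (auto simp: op_kernel_def)
    show "op_kernel (T ^^ Suc p) \<subseteq> op_kernel (T ^^ p)"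
      using kernel linear_0[OF assms(2)] by (auto simp: op_kernel_def simp del: funpow.simps)
  qed
  have range: "(T ^^ p) x = (T ^^ Suc p) (S x)" for x
  proof -
    have "(T ^^ p) x = (T ^^ p) (T (S x) + P x)" by (simp add: TS)
    then show ?thesis by (simp only: add TP add_0_right funpow_Suc_right comp_apply)
  qed
  show "range (T ^^ p) = range (T ^^ Suc p)"
  proof
    show "range (T ^^ p) \<subseteq> range (T ^^ Suc p)"
      using range by (auto simp del: funpow.simps)
    show "range (T ^^ Suc p) \<subseteq> range (T ^^ p)"
      by (auto simp: funpow_Suc_right simp del: funpow.simps)
  qed
qed

section \<open>Isolated points of the spectrum\<close>

lemma residue_cong_punctured_ball:
  assumes "\<delta> > 0" and "\<And>z. z \<in> ball l \<delta> - {l} \<Longrightarrow> f z = g z"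
  shows "residue f l = residue g l"
proof (rule residue_cong)
  show "eventually (\<lambda>z. f z = g z) (at l)"
    unfolding eventually_at using assms by (intro exI[of _ \<delta>]) (auto simp: dist_commute)
qed simp

lemma norm_residue_le_circle:
  assumes holo: "f holomorphic_on (ball l \<delta> - {l})" and r: "0 < r" "r < \<delta>" and "0 \<le> B"
    and bound: "\<And>z. cmod (z - l) = r \<Longrightarrow> cmod (f z) \<le> B"
  shows "cmod (residue f l) \<le> B * r"
proof -
  have "cball l r \<subseteq> ball l \<delta>" using r by (auto simp: dist_norm)
  then have "(f has_contour_integral 2 * pi * \<i> * residue f l) (circlepath l r)"
    using r by (intro base_residue[OF open_ball _ r(1) holo]) auto
  then have "norm (2 * pi * \<i> * residue f l) \<le> B * (2 * pi * r)"
    by (rule has_contour_integral_bound_circlepath[OF _ \<open>0 \<le> B\<close> r(1)]) (simp add: bound dist_norm norm_minus_commute)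
  then show ?thesis by (simp add: norm_mult mult_ac)
qed

locale isolated_spectral_point =
  fixes A Astar :: "'a::{complex_inner, complete_space} \<Rightarrow> 'a" and l :: complex and \<delta> :: real
  assumes A: "bounded_clinear A"
    and adj: "\<And>x y. cinner (A x) y = cinner x (Astar y)"
    and radius_pos: "\<delta> > 0"
    and isolated: "ball l \<delta> - {l} \<subseteq> - op_spectrum A"
begin

lemma centre_in_ball: "l \<in> ball l \<delta>"
  using radius_pos by simp

lemma holomorphic_on_cinner_resolvent_punctured:
  "(\<lambda>z. cinner y (resolvent A z x)) holomorphic_on (ball l \<delta> - {l})"
  by (rule holomorphic_on_subset[OF holomorphic_on_cinner_resolvent[OF A] isolated])

lemma resolvent_circle_bound:
  assumes "0 < r" "r < \<delta>"
  obtains C where "C > 0" "\<And>z u. cmod (z - l) = r \<Longrightarrow> norm (resolvent A z u) \<le> C * norm u"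
proof -
  have "sphere l r \<subseteq> - op_spectrum A"
    using isolated assms by (auto simp: dist_norm)
  then obtain C where "C > 0" "\<And>z u. z \<in> sphere l r \<Longrightarrow> norm (resolvent A z u) \<le> C * norm u"
    using resolvent_compact_bound[OF A compact_sphere] by metis
  then show ?thesis using that by (auto simp: dist_norm norm_minus_commute)
qed

lemma norm_residue_cinner_resolvent_le:
  assumes "\<phi> holomorphic_on (ball l \<delta> - {l})" and r: "0 < r" "r < \<delta>"
    and "0 \<le> C" and C: "\<And>z u. cmod (z - l) = r \<Longrightarrow> norm (resolvent A z u) \<le> C * norm u"
    and "0 \<le> B" and B: "\<And>z. cmod (z - l) = r \<Longrightarrow> cmod (\<phi> z) \<le> B"
  shows "cmod (residue (\<lambda>z. \<phi> z * cinner y (resolvent A z x)) l) \<le> B * C * norm x * norm y * r"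
proof -
  have "cmod (residue (\<lambda>z. \<phi> z * cinner y (resolvent A z x)) l) \<le> (B * (C * norm x * norm y)) * r"
  proof (rule norm_residue_le_circle[OF _ r])
    show "(\<lambda>z. \<phi> z * cinner y (resolvent A z x)) holomorphic_on (ball l \<delta> - {l})"
      by (intro holomorphic_intros assms(1) holomorphic_on_cinner_resolvent_punctured)
    show "0 \<le> B * (C * norm x * norm y)" using \<open>0 \<le> B\<close> \<open>0 \<le> C\<close> by simp
    fix z assume z: "cmod (z - l) = r"
    have "cmod (cinner y (resolvent A z x)) \<le> norm y * (C * norm x)"
      using norm_cinner_le[of y] C[OF z] order_trans mult_left_mono norm_ge_zero by metis
    then show "cmod (\<phi> z * cinner y (resolvent A z x)) \<le> B * (C * norm x * norm y)"
      unfolding norm_mult using B[OF z] \<open>0 \<le> B\<close> by (intro mult_mono) (auto simp: mult_ac)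
  qed
  then show ?thesis by (simp add: mult_ac)
qed

lemma residue_cinner_resolvent_bounded:
  assumes \<phi>: "\<phi> holomorphic_on (ball l \<delta> - {l})"
  obtains K where "0 \<le> K"
    "\<And>x y. cmod (residue (\<lambda>z. \<phi> z * cinner y (resolvent A z x)) l) \<le> K * norm x * norm y"
proof -
  define r where "r = \<delta> / 2"
  have r: "0 < r" "r < \<delta>" using radius_pos by (auto simp: r_def)
  obtain C where C: "C > 0" "\<And>z u. cmod (z - l) = r \<Longrightarrow> norm (resolvent A z u) \<le> C * norm u"
    using resolvent_circle_bound[OF r] by blast
  have "sphere l r \<subseteq> ball l \<delta> - {l}" using r by auto
  then have "compact (\<phi> ` sphere l r)"
    by (intro compact_continuous_image compact_sphere
        continuous_on_subset[OF holomorphic_on_imp_continuous_on[OF \<phi>]])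
  then obtain B where B: "B > 0" "\<And>z. z \<in> sphere l r \<Longrightarrow> cmod (\<phi> z) \<le> B"
    using compact_imp_bounded bounded_pos by (metis image_eqI)
  show ?thesis
  proof (rule that[of "B * C * r"])
    show "cmod (residue (\<lambda>z. \<phi> z * cinner y (resolvent A z x)) l) \<le> (B * C * r) * norm x * norm y" for x y
      using norm_residue_cinner_resolvent_le[OF \<phi> r _ C(2) _ B(2), of y x] B(1) C(1)
      by (simp add: dist_norm norm_minus_commute mult_ac)
  qed (use B C r in simp)
qed

lemma residue_op_exists:
  assumes \<phi>: "\<phi> holomorphic_on (ball l \<delta> - {l})"
  shows "\<exists>B. bounded_clinear B \<and> (\<forall>x y. cinner y (B x) = residue (\<lambda>z. \<phi> z * cinner y (resolvent A z x)) l)"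
proof -
  obtain K where K: "0 \<le> K"
    "\<And>x y. cmod (residue (\<lambda>z. \<phi> z * cinner y (resolvent A z x)) l) \<le> K * norm x * norm y"
    using residue_cinner_resolvent_bounded[OF \<phi>] by blast
  define g where "g x y z = \<phi> z * cinner y (resolvent A z x)" for x y z
  have holo: "g x y holomorphic_on (ball l \<delta> - {l})" for x y
    unfolding g_def by (intro holomorphic_intros \<phi> holomorphic_on_cinner_resolvent_punctured)
  have R: "bounded_clinear (resolvent A z)" if "dist l z < \<delta>" "z \<noteq> l" for z
    using that isolated by (intro bounded_clinear_resolvent) auto
  show ?thesis
    unfolding g_def[symmetric]
  proof (rule sesquilinear_form_representation[OF _ _ _ _ K(1)])
    show "residue (g x (y1 + y2)) l = residue (g x y1) l + residue (g x y2) l" for x y1 y2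
    proof -
      have "g x (y1 + y2) = (\<lambda>z. g x y1 z + g x y2 z)"
        by (simp add: g_def fun_eq_iff cinner_add_left distrib_left)
      then show ?thesis using residue_add[OF open_ball centre_in_ball holo[of x y1] holo[of x y2]] by simp
    qed
    show "residue (g x (c *\<^sub>C y)) l = cnj c * residue (g x y) l" for x c y
    proof -
      have "g x (c *\<^sub>C y) = (\<lambda>z. cnj c * g x y z)"
        by (simp add: g_def fun_eq_iff cinner_scaleC_left mult_ac)
      then show ?thesis using residue_lmul[OF open_ball centre_in_ball holo[of x y], of "cnj c"] by simp
    qed
    show "residue (g (x1 + x2) y) l = residue (g x1 y) l + residue (g x2 y) l" for x1 x2 y
    proof -
      have "residue (g (x1 + x2) y) l = residue (\<lambda>z. g x1 y z + g x2 y z) l"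
        using radius_pos
        by (intro residue_cong_punctured_ball) (auto simp: g_def clinear_add[OF R] cinner_add_right distrib_left)
      then show ?thesis using residue_add[OF open_ball centre_in_ball holo[of x1 y] holo[of x2 y]] by simp
    qed
    show "residue (g (c *\<^sub>C x) y) l = c * residue (g x y) l" for c x y
    proof -
      have "residue (g (c *\<^sub>C x) y) l = residue (\<lambda>z. c * g x y z) l"
        using radius_pos
        by (intro residue_cong_punctured_ball) (auto simp: g_def clinear_scaleC[OF R] cinner_scaleC_right mult_ac)
      then show ?thesis using residue_lmul[OF open_ball centre_in_ball holo[of x y], of c] by simp
    qed
    show "cmod (residue (g x y) l) \<le> K * norm x * norm y" for x y
      using K(2) by (simp add: g_def[abs_def])
  qed
qed

definition residue_op :: "(complex \<Rightarrow> complex) \<Rightarrow> 'a \<Rightarrow> 'a" where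
  "residue_op \<phi> = (SOME B. bounded_clinear B \<and>
     (\<forall>x y. cinner y (B x) = residue (\<lambda>z. \<phi> z * cinner y (resolvent A z x)) l))"

lemma
  assumes "\<phi> holomorphic_on (ball l \<delta> - {l})"
  shows bounded_clinear_residue_op: "bounded_clinear (residue_op \<phi>)"
    and cinner_residue_op: "cinner y (residue_op \<phi> x) = residue (\<lambda>z. \<phi> z * cinner y (resolvent A z x)) l"
  using someI_ex[OF residue_op_exists[OF assms]] unfolding residue_op_def by blast+

text \<open>Since resolvent A z = (A - z)^-1, riesz_proj is the Riesz projection
  (2 pi i)^-1 \<oint> (z - A)^-1 dz around l.\<close>

definition riesz_proj :: "'a \<Rightarrow> 'a" where "riesz_proj = residue_op (\<lambda>_. -1)"

definition riesz_inverse :: "'a \<Rightarrow> 'a" where "riesz_inverse = residue_op (\<lambda>z. 1 / (z - l))"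

lemma bounded_clinear_riesz_inverse: "bounded_clinear riesz_inverse"
  unfolding riesz_inverse_def by (rule bounded_clinear_residue_op) (intro holomorphic_intros; auto)

lemma cinner_riesz_proj: "cinner y (riesz_proj x) = - residue (\<lambda>z. cinner y (resolvent A z x)) l"
  using residue_lmul[OF open_ball centre_in_ball holomorphic_on_cinner_resolvent_punctured, of "-1"]
  by (simp add: riesz_proj_def cinner_residue_op)

lemma cinner_shift_op_resolvent:
  assumes "z \<in> ball l \<delta> - {l}"
  shows "cinner y (resolvent A z (shift_op A l x)) = cinner y x + (z - l) * cinner y (resolvent A z x)"
    and "cinner (shift_op Astar (cnj l) y) (resolvent A z x) = cinner y x + (z - l) * cinner y (resolvent A z x)"
proof -
  have z: "z \<notin> op_spectrum A" using assms isolated by blast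
  have shift: "shift_op A l u = shift_op A z u + (z - l) *\<^sub>C u" for u
    by (simp add: shift_op_def scaleC_diff_left)
  show "cinner y (resolvent A z (shift_op A l x)) = cinner y x + (z - l) * cinner y (resolvent A z x)"
    by (simp add: shift clinear_add[OF bounded_clinear_resolvent[OF z]]
        clinear_scaleC[OF bounded_clinear_resolvent[OF z]] resolvent_shift_op[OF z] cinner_simps)
  show "cinner (shift_op Astar (cnj l) y) (resolvent A z x) = cinner y x + (z - l) * cinner y (resolvent A z x)"
    by (simp add: cinner_shift_op_adjoint_right[OF adj, symmetric] shift shift_op_resolvent[OF z] cinner_simps)
qed

lemma residue_shift_quotient:
  "residue (\<lambda>z. 1 / (z - l) * (cinner y x + (z - l) * cinner y (resolvent A z x))) l
    = cinner y (x - riesz_proj x)"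
proof -
  have holo: "(\<lambda>z. cinner y x / (z - l)) holomorphic_on (ball l \<delta> - {l})"
    by (intro holomorphic_intros) auto
  have "residue (\<lambda>z. 1 / (z - l) * (cinner y x + (z - l) * cinner y (resolvent A z x))) l
      = residue (\<lambda>z. cinner y x / (z - l) + cinner y (resolvent A z x)) l"
    using radius_pos by (intro residue_cong_punctured_ball) (auto simp: field_simps)
  also have "\<dots> = residue (\<lambda>z. cinner y x / (z - l)) l + residue (\<lambda>z. cinner y (resolvent A z x)) l"
    using residue_add[OF open_ball centre_in_ball holo holomorphic_on_cinner_resolvent_punctured] by simp
  also have "residue (\<lambda>z. cinner y x / (z - l)) l = cinner y x"
    using residue_simple[OF open_ball centre_in_ball holomorphic_on_const, of "cinner y x"] by simp
  finally show ?thesis by (simp add: cinner_riesz_proj cinner_diff_right)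
qed

lemma riesz_inverse_shift_op: "riesz_inverse (shift_op A l x) = x - riesz_proj x"
proof (rule cinner_ext)
  fix y
  have "cinner y (riesz_inverse (shift_op A l x))
      = residue (\<lambda>z. 1 / (z - l) * (cinner y x + (z - l) * cinner y (resolvent A z x))) l"
    unfolding riesz_inverse_def using radius_pos
    by (subst cinner_residue_op) (auto intro!: holomorphic_intros residue_cong_punctured_ball
        simp: cinner_shift_op_resolvent(1))
  also have "\<dots> = cinner y (x - riesz_proj x)" by (rule residue_shift_quotient)
  finally show "cinner y (riesz_inverse (shift_op A l x)) = cinner y (x - riesz_proj x)" .
qed

lemma shift_op_riesz_inverse: "shift_op A l (riesz_inverse x) = x - riesz_proj x"
proof (rule cinner_ext)
  fix y
  have "cinner y (shift_op A l (riesz_inverse x)) = cinner (shift_op Astar (cnj l) y) (riesz_inverse x)"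
    by (rule cinner_shift_op_adjoint_right[OF adj])
  also have "\<dots> = residue (\<lambda>z. 1 / (z - l) * (cinner y x + (z - l) * cinner y (resolvent A z x))) l"
    unfolding riesz_inverse_def using radius_pos
    by (subst cinner_residue_op) (auto intro!: holomorphic_intros residue_cong_punctured_ball
        simp: cinner_shift_op_resolvent(2))
  also have "\<dots> = cinner y (x - riesz_proj x)" by (rule residue_shift_quotient)
  finally show "cinner y (shift_op A l (riesz_inverse x)) = cinner y (x - riesz_proj x)" .
qed

lemma cinner_funpow_shift_op_riesz_proj:
  "cinner y ((shift_op A l ^^ m) (riesz_proj x)) = - residue (\<lambda>z. (z - l) ^ m * cinner y (resolvent A z x)) l"
proof (induction m arbitrary: y)
  case (Suc m)
  have poly: "(\<lambda>z. (z - l) ^ m * cinner y x) holomorphic_on ball l \<delta>" by (intro holomorphic_intros)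
  have holo: "(\<lambda>z. (z - l) ^ Suc m * cinner y (resolvent A z x)) holomorphic_on (ball l \<delta> - {l})"
    by (intro holomorphic_intros holomorphic_on_cinner_resolvent_punctured)
  have "cinner y ((shift_op A l ^^ Suc m) (riesz_proj x))
      = cinner (shift_op Astar (cnj l) y) ((shift_op A l ^^ m) (riesz_proj x))"
    by (simp add: cinner_shift_op_adjoint_right[OF adj])
  also have "\<dots> = - residue (\<lambda>z. (z - l) ^ m * cinner (shift_op Astar (cnj l) y) (resolvent A z x)) l"
    by (rule Suc)
  also have "residue (\<lambda>z. (z - l) ^ m * cinner (shift_op Astar (cnj l) y) (resolvent A z x)) l
      = residue (\<lambda>z. (z - l) ^ m * cinner y x + (z - l) ^ Suc m * cinner y (resolvent A z x)) l"
    using radius_pos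
    by (intro residue_cong_punctured_ball) (auto simp: cinner_shift_op_resolvent(2) algebra_simps)
  also have "\<dots> = residue (\<lambda>z. (z - l) ^ m * cinner y x) l + residue (\<lambda>z. (z - l) ^ Suc m * cinner y (resolvent A z x)) l"
    by (rule residue_add[OF open_ball centre_in_ball holomorphic_on_subset[OF poly] holo]) auto
  also have "residue (\<lambda>z. (z - l) ^ m * cinner y x) l = 0"
    by (rule residue_holo[OF open_ball centre_in_ball poly])
  finally show ?case by simp
qed (simp add: cinner_riesz_proj)

lemma norm_funpow_shift_op_riesz_proj_le:
  assumes r: "0 < r" "r < \<delta>"
  shows "\<exists>K>0. \<forall>m. norm ((shift_op A l ^^ m) (riesz_proj x)) \<le> K * r ^ m"
proof -
  obtain C where C: "C > 0" "\<And>z u. cmod (z - l) = r \<Longrightarrow> norm (resolvent A z u) \<le> C * norm u"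
    using resolvent_circle_bound[OF r] by blast
  have "norm ((shift_op A l ^^ m) (riesz_proj x)) \<le> (C * r * norm x + 1) * r ^ m" for m
  proof -
    define v where "v = (shift_op A l ^^ m) (riesz_proj x)"
    have "cinner v v = - residue (\<lambda>z. (z - l) ^ m * cinner v (resolvent A z x)) l"
      unfolding v_def by (rule cinner_funpow_shift_op_riesz_proj)
    then have "(norm v)\<^sup>2 = cmod (residue (\<lambda>z. (z - l) ^ m * cinner v (resolvent A z x)) l)"
      by (metis cinner_self_norm norm_minus_cancel norm_of_real abs_power2 real_norm_def)
    also have "\<dots> \<le> r ^ m * C * norm x * norm v * r"
      using r C by (intro norm_residue_cinner_resolvent_le) (auto intro!: holomorphic_intros simp: norm_power)
    finally have "(norm v)\<^sup>2 \<le> (C * r * norm x * r ^ m) * norm v" by (simp add: mult_ac)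
    then have "norm v \<le> C * r * norm x * r ^ m"
      using C r by (simp add: le_if_power2_le_mult)
    also have "\<dots> \<le> (C * r * norm x + 1) * r ^ m" using r by (simp add: distrib_right)
    finally show ?thesis by (simp add: v_def)
  qed
  moreover have "C * r * norm x + 1 > 0" using C r by (simp add: add_nonneg_pos)
  ultimately show ?thesis by blast
qed

lemma riesz_proj_quasinilpotent: "riesz_proj x \<in> quasinilpotent_part (shift_op A l)"
  by (rule quasinilpotent_partI_radius[OF radius_pos norm_funpow_shift_op_riesz_proj_le])

lemma ascent_descent_if_quasinilpotent_part_eq_kernel:
  assumes "l \<in> op_spectrum A" and H0: "quasinilpotent_part (shift_op A l) = op_kernel (shift_op A l ^^ p)"
  shows "\<exists>q>0. is_ascent (shift_op A l) q \<and> is_descent (shift_op A l) q"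
proof -
  have lin: "linear (shift_op A l)" "linear riesz_inverse"
    using bounded_clinear_shift_op[OF A] bounded_clinear_riesz_inverse
    by (simp_all add: bounded_clinear_def bounded_linear.linear)
  have P: "(shift_op A l ^^ p) (riesz_proj x) = 0" for x
    using riesz_proj_quasinilpotent[of x] by (simp add: H0 op_kernel_def)
  obtain q where q: "is_ascent (shift_op A l) q" "is_descent (shift_op A l) q"
    using ascent_eq_descent[OF lin(1) kernel_range_stable_if_inverse_modulo[OF lin riesz_inverse_shift_op
          shift_op_riesz_inverse P]] by blast
  have "q > 0"
  proof (rule ccontr)
    assume "\<not> q > 0"
    then have "op_kernel (shift_op A l ^^ (0 + p)) = op_kernel (shift_op A l ^^ 0)"
      using q(1) op_kernel_funpow_stable[of "shift_op A l" 0 p, OF linear_0[OF lin(1)]] by (simp add: is_ascent_def)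
    then have "riesz_proj x = 0" for x using P by (auto simp: op_kernel_def)
    then have "riesz_inverse \<circ> shift_op A l = id" "shift_op A l \<circ> riesz_inverse = id"
      by (simp_all add: fun_eq_iff riesz_inverse_shift_op shift_op_riesz_inverse)
    then have "l \<notin> op_spectrum A" using bounded_clinear_riesz_inverse by (auto simp: op_spectrum_def)
    then show False using assms(1) by simp
  qed
  then show ?thesis using q by blast
qed

end

lemma polaroidI_kernel_power:
  fixes A Astar :: "'a::{complex_inner, complete_space} \<Rightarrow> 'a"
  assumes "bounded_clinear A" and "\<And>x y. cinner (A x) y = cinner x (Astar y)"
    and kernel: "\<And>l. l \<in> op_spectrum A \<Longrightarrow> \<exists>p. quasinilpotent_part (shift_op A l) = op_kernel (shift_op A l ^^ p)"
  shows "polaroid A"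
  unfolding polaroid_def
proof (intro allI impI)
  fix l assume l: "l \<in> op_spectrum A \<and> \<not> l islimpt op_spectrum A"
  then obtain \<delta> where "\<delta> > 0" "\<And>z. z \<in> op_spectrum A \<Longrightarrow> z \<noteq> l \<Longrightarrow> \<not> dist z l < \<delta>"
    unfolding islimpt_approachable by blast
  then interpret isolated_spectral_point A Astar l \<delta>
    using assms(1,2) by unfold_locales (auto simp: dist_commute)
  obtain p where "quasinilpotent_part (shift_op A l) = op_kernel (shift_op A l ^^ p)"
    using kernel l by blast
  \<comment> \<open>qualified because HOL-Complex_Analysis has its own is_pole\<close>
  then show "Defs.is_pole A l"
    using ascent_descent_if_quasinilpotent_part_eq_kernel l unfolding Defs.is_pole_def by blast
qed

theorem theorem3p3:
  fixes A Astar :: "'a::{complex_inner, complete_space} \<Rightarrow> 'a" and n :: nat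
  assumes "infinite_dimensional TYPE('a)"
    and "bounded_clinear A"
    and "\<forall>x y. cinner (A x) y = cinner x (Astar y)"
    and "n > 1"
    and "Astar \<circ> (A ^^ n) = (A ^^ n) \<circ> Astar"
  shows "(\<forall>l. l \<noteq> 0 \<and> l \<in> op_spectrum A \<longrightarrow>
            quasinilpotent_part (shift_op A l) = op_kernel (shift_op A l))
       \<and> quasinilpotent_part A = op_kernel (A ^^ n)
       \<and> polaroid A"
proof -
  note A = assms(2)
  have adj: "\<And>x y. cinner (A x) y = cinner x (Astar y)" and "n > 0"
    and commute: "\<And>x. Astar ((A ^^ n) x) = (A ^^ n) (Astar x)"
    using assms(3-5) by (auto simp: fun_eq_iff)
  note shift = quasinilpotent_part_shift_eq_kernel[OF A adj \<open>n > 0\<close> commute]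
  note zero = quasinilpotent_part_eq_kernel_power[OF A adj \<open>n > 0\<close> commute]
  have "polaroid A"
  proof (rule polaroidI_kernel_power[OF A adj])
    fix l
    show "\<exists>p. quasinilpotent_part (shift_op A l) = op_kernel (shift_op A l ^^ p)"
    proof (cases "l = 0")
      case True
      then show ?thesis using zero by (intro exI[of _ n]) (simp add: shift_op_def)
    next
      case False
      then show ?thesis using shift by (intro exI[of _ 1]) simp
    qed
  qed
  then show ?thesis using shift zero by blast
qed

end
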